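(* Let $A, B_1, \ldots, B_m \in \mathbb{C}^{d\times d}$. Define the $d^2\times d^2$ matrices \[ D_{A,B}=\overline{A}\otimes A+\sum_{k=1}^m \overline{B}_k\otimes B_k,\qquad C_{A,B}=\overline{A}\otimes I+I\otimes A+\sum_{k=1}^m \overline{B}_k\otimes B_k, \] and the $d\times d$ Hermitian matrices \[ N_{A,B}=A^*A+\sum_{k=1}^m B_k^*B_k,\qquad M_{A,B}=A+A^*+\sum_{k=1}^m B_k^*B_k. \] Then \[ \varrho(N_{A,B})\le \rho(D_{A,B})\le \alpha(N_{A,B}),\qquad \varrho(M_{A,B})\le \alpha(C_{A,B})\le \alpha(M_{A,B}). \]
   Context: For a matrix $X$, $\overline{X}$ is the entrywise complex conjugate, $X^*$ the conjugate transpose, $I$ the identity matrix, and $\otimes$ the Kronecker product ($X\otimes Y$ is the block matrix with blocks $X_{ij}Y$). For a square matrix $X$: $\rho(X)=\max\{|\lambda|:\lambda \text{ eigenvalue of } X\}$ (spectral radius), $\alpha(X)=\max\{\operatorname{Re}\lambda:\lambda \text{ eigenvalue of } X\}$ (spectral abscissa), and $\varrho(X)=\min\{\operatorname{Re}\lambda:\lambda \text{ eigenvalue of } X\}$. For a Hermitian matrix, $\varrho$ and $\alpha$ are its smallest and largest eigenvalues. *)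

theory Defs
  imports "Jordan_Normal_Form.Spectral_Radius" "Jordan_Normal_Form.Schur_Decomposition"
begin

definition mat_conj :: "complex mat \<Rightarrow> complex mat" where
  "mat_conj A = mat (dim_row A) (dim_col A) (\<lambda>(i,j). cnj (A $$ (i,j)))"

definition kron :: "complex mat \<Rightarrow> complex mat \<Rightarrow> complex mat" where
  "kron X Y = mat (dim_row X * dim_row Y) (dim_col X * dim_col Y)
     (\<lambda>(i,j). X $$ (i div dim_row Y, j div dim_col Y) * Y $$ (i mod dim_row Y, j mod dim_col Y))"

definition spectral_abscissa :: "complex mat \<Rightarrow> real" where
  "spectral_abscissa A = Max (Re ` spectrum A)"

definition spectral_min_re :: "complex mat \<Rightarrow> real" where
  "spectral_min_re A = Min (Re ` spectrum A)"

definition msum :: "nat \<Rightarrow> (nat \<Rightarrow> complex mat) \<Rightarrow> nat set \<Rightarrow> complex mat" where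
  "msum n f K = mat n n (\<lambda>ij. \<Sum>k\<in>K. f k $$ ij)"

end

theory Submission
  imports Defs "HOL-Analysis.L2_Norm"
begin

text \<open>
Identify a matrix \<open>Y\<close> with \<open>vec Y\<close>. Then \<open>D\<^sup>T\<close> and \<open>C\<^sup>T\<close> act as the maps
\<open>\<Phi>(Y) = \<Sum>\<^sub>k F\<^sub>k\<^sup>* Y F\<^sub>k\<close> (with \<open>F\<^sub>0 = A\<close>, \<open>F\<^sub>k = B\<^sub>k\<close>) and
\<open>\<L>(Y) = A\<^sup>* Y + Y A + \<Sum>\<^sub>k B\<^sub>k\<^sup>* Y B\<^sub>k\<close>, whose values at the identity are \<open>N\<close> and \<open>M\<close>.

Upper bounds: if \<open>\<Phi>(Y) = \<mu> Y\<close>, Cauchy--Schwarz together with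
\<open>\<Sum>\<^sub>k |F\<^sub>k a|\<^sup>2 = a\<^sup>* N a \<le> \<alpha>(N) |a|\<^sup>2\<close> turns any bound \<open>|a\<^sup>* Y b| \<le> c |a| |b|\<close> into the
bound with \<open>c \<alpha>(N) / |\<mu>|\<close>, so \<open>|\<mu>| > \<alpha>(N)\<close> forces \<open>Y = 0\<close>. For \<open>C\<close> the same argument is
applied to the Euler step \<open>Y + t \<L>(Y)\<close>, which is a map of the form \<open>\<Phi>\<close> up to \<open>t\<^sup>2 A\<^sup>* Y A\<close>.

Lower bounds: the iterates \<open>\<Phi>\<^sup>k(I)\<close> dominate \<open>\<varrho>(N)\<^sup>k I\<close>, while their entries grow at most like
\<open>r\<^sup>k\<close> for every \<open>r > \<rho>(D)\<close>. For \<open>C\<close> the iterates of the resolvent \<open>(c I - \<L>)\<^sup>-\<^sup>1\<close> at \<open>I\<close>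
stay Hermitian with smallest eigenvalue at least \<open>(c - \<varrho>(M))\<^sup>-\<^sup>k\<close>, which is incompatible with
\<open>\<alpha>(C) < \<varrho>(M)\<close> because then the resolvent has spectral radius below \<open>1 / (c - \<varrho>(M))\<close>.
\<close>

section \<open>Vectors as functions\<close>

text \<open>Vectors in \<open>\<complex>\<^sup>d\<close> are functions \<open>nat \<Rightarrow> complex\<close> read on \<open>{..<d}\<close>: \<open>mvec\<close> is the
matrix-vector product, \<open>sform d Y a b = a\<^sup>* Y b\<close> and \<open>sqnorm d a = |a|\<^sup>2\<close>.\<close>

definition mvec :: "nat \<Rightarrow> complex mat \<Rightarrow> (nat \<Rightarrow> complex) \<Rightarrow> nat \<Rightarrow> complex" where
  "mvec d K a = (\<lambda>i. \<Sum>j<d. K $$ (i,j) * a j)"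

definition sform :: "nat \<Rightarrow> complex mat \<Rightarrow> (nat \<Rightarrow> complex) \<Rightarrow> (nat \<Rightarrow> complex) \<Rightarrow> complex" where
  "sform d Y a b = (\<Sum>i<d. \<Sum>j<d. cnj (a i) * Y $$ (i,j) * b j)"

definition sqnorm :: "nat \<Rightarrow> (nat \<Rightarrow> complex) \<Rightarrow> real" where
  "sqnorm d a = (\<Sum>i<d. (cmod (a i))\<^sup>2)"

definition frobenius_sq :: "nat \<Rightarrow> complex mat \<Rightarrow> real" where
  "frobenius_sq d K = (\<Sum>i<d. \<Sum>j<d. (cmod (K $$ (i,j)))\<^sup>2)"

definition basis_fun :: "nat \<Rightarrow> nat \<Rightarrow> complex" where
  "basis_fun i = (\<lambda>k. if k = i then 1 else 0)"

lemma sqnorm_nonneg: "sqnorm d a \<ge> 0"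
  unfolding sqnorm_def by (intro sum_nonneg) simp

lemma sqnorm_cong: "(\<And>j. j < d \<Longrightarrow> u j = w j) \<Longrightarrow> sqnorm d u = sqnorm d w"
  unfolding sqnorm_def by (intro sum.cong refl) auto

lemma mvec_cong: "(\<And>j. j < d \<Longrightarrow> u j = w j) \<Longrightarrow> mvec d K u i = mvec d K w i"
  unfolding mvec_def by (intro sum.cong refl) auto

lemma sform_cong:
  "(\<And>i j. i < d \<Longrightarrow> j < d \<Longrightarrow> X $$ (i,j) = Y $$ (i,j)) \<Longrightarrow> sform d X a b = sform d Y a b"
  unfolding sform_def by (intro sum.cong refl) auto

lemma sform_cong_left: "(\<And>i. i < d \<Longrightarrow> u i = u' i) \<Longrightarrow> sform d Y u b = sform d Y u' b"
  unfolding sform_def by (intro sum.cong refl) auto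

lemma sform_cong_right: "(\<And>i. i < d \<Longrightarrow> u i = u' i) \<Longrightarrow> sform d Y a u = sform d Y a u'"
  unfolding sform_def by (intro sum.cong refl) auto

lemma sform_eq_inner_mvec: "sform d Y a b = (\<Sum>i<d. cnj (a i) * mvec d Y b i)"
  unfolding sform_def mvec_def by (simp add: sum_distrib_left mult.assoc)

lemma mvec_one: assumes "i < d" shows "mvec d (1\<^sub>m d) z i = z i"
proof -
  have "mvec d (1\<^sub>m d) z i = (\<Sum>j<d. if j = i then z j else 0)"
    unfolding mvec_def using assms by (intro sum.cong refl) auto
  thus ?thesis using assms by simp
qed

lemma sform_one: "sform d (1\<^sub>m d) u v = (\<Sum>i<d. cnj (u i) * v i)"
  unfolding sform_eq_inner_mvec by (intro sum.cong refl) (simp add: mvec_one)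

lemma sform_one_self: "sform d (1\<^sub>m d) u u = of_real (sqnorm d u)"
  unfolding sform_one sqnorm_def of_real_sum
  by (intro sum.cong refl) (metis complex_norm_square mult.commute)

lemma sqnorm_eq_inner: "complex_of_real (sqnorm d u) = (\<Sum>i<d. cnj (u i) * u i)"
  using sform_one_self[of d u] sform_one[of d u u] by simp

lemma sqnorm_eq_0_imp: assumes "sqnorm d u = 0" "j < d" shows "u j = 0"
proof -
  have "\<forall>i\<in>{..<d}. (cmod (u i))\<^sup>2 = 0"
    using assms(1) unfolding sqnorm_def by (subst sum_nonneg_eq_0_iff[symmetric]) auto
  thus ?thesis using assms(2) by auto
qed

lemma norm_le_sqrt_sqnorm: "i < d \<Longrightarrow> cmod (a i) \<le> sqrt (sqnorm d a)"
  unfolding sqnorm_def by (intro real_le_rsqrt member_le_sum) auto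

lemma sqnorm_basis_fun: "i < d \<Longrightarrow> sqnorm d (basis_fun i) = 1"
  unfolding sqnorm_def basis_fun_def by (simp add: if_distrib if_distribR cong: if_cong)

lemma sum_mult_basis_fun: assumes "j < d" shows "(\<Sum>b<d. f b * basis_fun j b) = f j"
proof -
  have "(\<Sum>b<d. f b * basis_fun j b) = (\<Sum>b<d. if b = j then f b else 0)"
    by (intro sum.cong refl) (simp add: basis_fun_def)
  thus ?thesis using assms by simp
qed

lemma sform_basis_fun: assumes "i < d" "j < d" shows "sform d Y (basis_fun i) (basis_fun j) = Y $$ (i,j)"
proof -
  have "sform d Y (basis_fun i) (basis_fun j) = (\<Sum>a<d. cnj (basis_fun i a) * Y $$ (a,j))"
    unfolding sform_def by (intro sum.cong refl) (rule sum_mult_basis_fun[OF assms(2)])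
  also have "\<dots> = (\<Sum>a<d. Y $$ (a,j) * basis_fun i a)"
    by (intro sum.cong refl) (simp add: basis_fun_def)
  also have "\<dots> = Y $$ (i,j)" by (rule sum_mult_basis_fun[OF assms(1)])
  finally show ?thesis .
qed

lemma inner_cauchy_schwarz: "cmod (\<Sum>i<d. cnj (u i) * v i) \<le> sqrt (sqnorm d u) * sqrt (sqnorm d v)"
proof -
  have "cmod (\<Sum>i<d. cnj (u i) * v i) \<le> (\<Sum>i<d. \<bar>cmod (u i)\<bar> * \<bar>cmod (v i)\<bar>)"
    by (rule order.trans[OF norm_sum]) (simp add: norm_mult)
  also have "\<dots> \<le> L2_set (\<lambda>i. cmod (u i)) {..<d} * L2_set (\<lambda>i. cmod (v i)) {..<d}"
    by (rule L2_set_mult_ineq)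
  also have "\<dots> = sqrt (sqnorm d u) * sqrt (sqnorm d v)" unfolding L2_set_def sqnorm_def by simp
  finally show ?thesis .
qed

lemma sum_sqrt_mult_le:
  fixes f g :: "'b \<Rightarrow> real"
  assumes "\<And>k. k \<in> S \<Longrightarrow> f k \<ge> 0" "\<And>k. k \<in> S \<Longrightarrow> g k \<ge> 0"
  shows "(\<Sum>k\<in>S. sqrt (f k) * sqrt (g k)) \<le> sqrt (\<Sum>k\<in>S. f k) * sqrt (\<Sum>k\<in>S. g k)"
proof -
  have "(\<Sum>k\<in>S. sqrt (f k) * sqrt (g k)) = (\<Sum>k\<in>S. \<bar>sqrt (f k)\<bar> * \<bar>sqrt (g k)\<bar>)"
    using assms by (intro sum.cong refl) auto
  also have "\<dots> \<le> L2_set (\<lambda>k. sqrt (f k)) S * L2_set (\<lambda>k. sqrt (g k)) S"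
    by (rule L2_set_mult_ineq)
  also have "\<dots> = sqrt (\<Sum>k\<in>S. f k) * sqrt (\<Sum>k\<in>S. g k)"
    unfolding L2_set_def using assms by (simp cong: sum.cong)
  finally show ?thesis .
qed

lemma sform_add_scale_left:
  "sform d Y (\<lambda>i. u i + complex_of_real t * w i) b = sform d Y u b + complex_of_real t * sform d Y w b"
  unfolding sform_def by (simp add: algebra_simps sum.distrib sum_distrib_left)

lemma sform_add_scale_right:
  "sform d Y a (\<lambda>i. u i + complex_of_real t * w i) = sform d Y a u + complex_of_real t * sform d Y a w"
  unfolding sform_def by (simp add: algebra_simps sum.distrib sum_distrib_left)

lemma sform_scale:
  "sform d Y (\<lambda>i. complex_of_real s * u i) (\<lambda>i. complex_of_real s * w i)
     = complex_of_real (s * s) * sform d Y u w"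
  unfolding sform_def by (simp add: algebra_simps sum_distrib_left)

lemma sqnorm_scale: "sqnorm d (\<lambda>i. complex_of_real s * u i) = s\<^sup>2 * sqnorm d u"
  unfolding sqnorm_def by (simp add: norm_mult power_mult_distrib sum_distrib_left)

lemma sqnorm_add_scale:
  "sqnorm d (\<lambda>i. u i + complex_of_real t * w i)
     = sqnorm d u + 2 * t * Re (\<Sum>i<d. cnj (u i) * w i) + t\<^sup>2 * sqnorm d w"
proof -
  define S where "S = (\<Sum>i<d. cnj (u i) * w i)"
  have "complex_of_real (sqnorm d (\<lambda>i. u i + complex_of_real t * w i))
     = (\<Sum>i<d. cnj (u i) * u i) + complex_of_real t * S + complex_of_real t * (\<Sum>i<d. cnj (w i) * u i)
       + complex_of_real (t\<^sup>2) * (\<Sum>i<d. cnj (w i) * w i)"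
    unfolding sqnorm_eq_inner S_def by (simp add: algebra_simps sum.distrib sum_distrib_left power2_eq_square)
  also have "(\<Sum>i<d. cnj (w i) * u i) = cnj S" unfolding S_def by (simp add: mult.commute)
  finally have "complex_of_real (sqnorm d (\<lambda>i. u i + complex_of_real t * w i))
     = complex_of_real (sqnorm d u) + complex_of_real t * S + complex_of_real t * cnj S
       + complex_of_real (t\<^sup>2) * complex_of_real (sqnorm d w)"
    unfolding sqnorm_eq_inner .
  hence "Re (complex_of_real (sqnorm d (\<lambda>i. u i + complex_of_real t * w i)))
      = sqnorm d u + t * Re S + t * Re S + t\<^sup>2 * sqnorm d w"
    by simp
  thus ?thesis unfolding S_def by simp
qed

lemma frobenius_sq_nonneg: "frobenius_sq d K \<ge> 0"
  unfolding frobenius_sq_def by (intro sum_nonneg) simp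

lemma sqnorm_mvec_le_frobenius: "sqnorm d (mvec d K a) \<le> frobenius_sq d K * sqnorm d a"
proof -
  have "(cmod (mvec d K a i))\<^sup>2 \<le> (\<Sum>j<d. (cmod (K $$ (i,j)))\<^sup>2) * sqnorm d a" for i
  proof -
    have "cmod (mvec d K a i) = cmod (\<Sum>j<d. cnj (cnj (K $$ (i,j))) * a j)" unfolding mvec_def by simp
    also have "\<dots> \<le> sqrt (sqnorm d (\<lambda>j. cnj (K $$ (i,j)))) * sqrt (sqnorm d a)"
      by (rule inner_cauchy_schwarz)
    finally have "(cmod (mvec d K a i))\<^sup>2 \<le> (sqrt (sqnorm d (\<lambda>j. cnj (K $$ (i,j)))) * sqrt (sqnorm d a))\<^sup>2"
      by (intro power_mono) auto
    also have "\<dots> = sqnorm d (\<lambda>j. cnj (K $$ (i,j))) * sqnorm d a"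
      by (simp add: power_mult_distrib sqnorm_nonneg)
    also have "sqnorm d (\<lambda>j. cnj (K $$ (i,j))) = (\<Sum>j<d. (cmod (K $$ (i,j)))\<^sup>2)"
      unfolding sqnorm_def by simp
    finally show ?thesis .
  qed
  hence "sqnorm d (mvec d K a) \<le> (\<Sum>i<d. (\<Sum>j<d. (cmod (K $$ (i,j)))\<^sup>2) * sqnorm d a)"
    unfolding sqnorm_def by (intro sum_mono) (simp add: sqnorm_def)
  thus ?thesis unfolding frobenius_sq_def by (simp add: sum_distrib_right)
qed

lemma mvec_mult_mat_vec: assumes "K \<in> carrier_mat d d" "v \<in> carrier_vec d" "i < d"
  shows "(K *\<^sub>v v) $ i = mvec d K (($) v) i"
  using assms by (simp add: scalar_prod_def atLeast0LessThan mvec_def)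

lemma mvec_mult: assumes "K \<in> carrier_mat d d" "L \<in> carrier_mat d d" "i < d"
  shows "mvec d (K * L) a i = mvec d K (mvec d L a) i"
proof -
  have "mvec d (K * L) a i = (\<Sum>j<d. \<Sum>l<d. K $$ (i,l) * L $$ (l,j) * a j)"
    unfolding mvec_def using assms
    by (intro sum.cong refl) (simp add: scalar_prod_def atLeast0LessThan sum_distrib_right)
  also have "\<dots> = (\<Sum>l<d. \<Sum>j<d. K $$ (i,l) * L $$ (l,j) * a j)" by (rule sum.swap)
  also have "\<dots> = mvec d K (mvec d L a) i" unfolding mvec_def by (simp add: sum_distrib_left mult.assoc)
  finally show ?thesis .
qed

lemma mvec_eigenvector: assumes K: "K \<in> carrier_mat d d" and ev: "eigenvector K v \<mu>" and i: "i < d"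
  shows "mvec d K (($) v) i = \<mu> * v $ i"
proof -
  from ev K have v: "v \<in> carrier_vec d" and Kv: "K *\<^sub>v v = \<mu> \<cdot>\<^sub>v v" unfolding eigenvector_def by auto
  have "(K *\<^sub>v v) $ i = \<mu> * v $ i" using Kv i v by simp
  thus ?thesis using mvec_mult_mat_vec[OF K v i] by simp
qed

lemma sqnorm_eigenvector_pos: assumes "K \<in> carrier_mat d d" "eigenvector K v \<mu>"
  shows "sqnorm d (($) v) > 0"
proof (rule ccontr)
  from assms have v: "v \<in> carrier_vec d" "v \<noteq> 0\<^sub>v d" unfolding eigenvector_def by auto
  assume "\<not> ?thesis"
  hence "sqnorm d (($) v) = 0" using sqnorm_nonneg[of d "($) v"] by simp
  hence "v = 0\<^sub>v d" using v(1) sqnorm_eq_0_imp by (intro eq_vecI) auto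
  with v(2) show False ..
qed

lemma sform_eigenvector: assumes "K \<in> carrier_mat d d" "eigenvector K v \<mu>"
  shows "sform d K u (($) v) = \<mu> * sform d (1\<^sub>m d) u (($) v)"
proof -
  have "sform d K u (($) v) = (\<Sum>i<d. cnj (u i) * (\<mu> * v $ i))"
    unfolding sform_eq_inner_mvec by (intro sum.cong refl) (simp add: mvec_eigenvector[OF assms])
  also have "\<dots> = \<mu> * sform d (1\<^sub>m d) u (($) v)" by (simp add: sform_one sum_distrib_left mult_ac)
  finally show ?thesis .
qed

lemma mem_spectrum_of_mvec:
  assumes X: "X \<in> carrier_mat n n" and v: "v \<in> carrier_vec n" "v \<noteq> 0\<^sub>v n"
    and ev: "\<And>i. i < n \<Longrightarrow> mvec n X (($) v) i = \<mu> * v $ i"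
  shows "\<mu> \<in> spectrum X"
proof -
  have "X *\<^sub>v v = \<mu> \<cdot>\<^sub>v v" by (rule eq_vecI) (use X v ev mvec_mult_mat_vec in auto)
  thus ?thesis using X v unfolding spectrum_def eigenvalue_def eigenvector_def by auto
qed

lemma sum_swap3: "(\<Sum>k\<in>K. \<Sum>i\<in>I. \<Sum>j\<in>J. f k i j) = (\<Sum>i\<in>I. \<Sum>j\<in>J. \<Sum>k\<in>K. f k i j)"
  by (subst sum.swap) (simp only: sum.swap[of _ K])

lemma sum_swap4:
  "(\<Sum>p\<in>P. \<Sum>q\<in>Q. \<Sum>i\<in>I. \<Sum>j\<in>J. f p q i j) = (\<Sum>i\<in>I. \<Sum>j\<in>J. \<Sum>p\<in>P. \<Sum>q\<in>Q. f p q i j)"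
proof -
  have "(\<Sum>p\<in>P. \<Sum>q\<in>Q. \<Sum>i\<in>I. \<Sum>j\<in>J. f p q i j) = (\<Sum>p\<in>P. \<Sum>i\<in>I. \<Sum>j\<in>J. \<Sum>q\<in>Q. f p q i j)"
    by (rule sum.cong[OF refl], rule sum_swap3)
  also have "\<dots> = (\<Sum>i\<in>I. \<Sum>j\<in>J. \<Sum>p\<in>P. \<Sum>q\<in>Q. f p q i j)" by (rule sum_swap3)
  finally show ?thesis .
qed


section \<open>Contraction of sesquilinear bounds\<close>

definition sform_bounded :: "nat \<Rightarrow> complex mat \<Rightarrow> real \<Rightarrow> bool" where
  "sform_bounded d Y c \<longleftrightarrow> (\<forall>a b. cmod (sform d Y a b) \<le> c * sqrt (sqnorm d a) * sqrt (sqnorm d b))"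

lemma sform_bounded_entry: assumes "sform_bounded d Y c" "i < d" "j < d" shows "cmod (Y $$ (i,j)) \<le> c"
  using assms(1) unfolding sform_bounded_def
  by (metis sform_basis_fun[OF assms(2,3)] sqnorm_basis_fun[OF assms(2)] sqnorm_basis_fun[OF assms(3)]
      real_sqrt_one mult.right_neutral)

lemma sform_bounded_entry_sum: "sform_bounded d Y (\<Sum>i<d. \<Sum>j<d. cmod (Y $$ (i,j)))"
  unfolding sform_bounded_def
proof (intro allI)
  fix a b
  have "cmod (sform d Y a b) \<le> (\<Sum>i<d. \<Sum>j<d. cmod (cnj (a i) * Y $$ (i,j) * b j))"
    unfolding sform_def by (rule order.trans[OF norm_sum sum_mono], rule norm_sum)
  also have "\<dots> \<le> (\<Sum>i<d. \<Sum>j<d. cmod (Y $$ (i,j)) * (sqrt (sqnorm d a) * sqrt (sqnorm d b)))"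
  proof (intro sum_mono)
    fix i j assume "i \<in> {..<d}" "j \<in> {..<d}"
    hence "cmod (a i) * cmod (b j) \<le> sqrt (sqnorm d a) * sqrt (sqnorm d b)"
      by (intro mult_mono norm_le_sqrt_sqnorm) (auto simp: sqnorm_nonneg)
    hence "cmod (Y $$ (i,j)) * (cmod (a i) * cmod (b j)) \<le> cmod (Y $$ (i,j)) * (sqrt (sqnorm d a) * sqrt (sqnorm d b))"
      by (rule mult_left_mono) simp
    thus "cmod (cnj (a i) * Y $$ (i,j) * b j) \<le> cmod (Y $$ (i,j)) * (sqrt (sqnorm d a) * sqrt (sqnorm d b))"
      by (simp add: norm_mult mult_ac)
  qed
  finally show "cmod (sform d Y a b) \<le> (\<Sum>i<d. \<Sum>j<d. cmod (Y $$ (i,j))) * sqrt (sqnorm d a) * sqrt (sqnorm d b)"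
    by (simp add: sum_distrib_right mult.assoc)
qed

text \<open>Cauchy--Schwarz over \<open>k\<close> is what turns the operator bound on \<open>\<Sum>\<^sub>k F\<^sub>k\<^sup>* F\<^sub>k\<close> into a
bound on \<open>\<Sum>\<^sub>k F\<^sub>k\<^sup>* Y F\<^sub>k\<close>.\<close>

lemma sform_bounded_kraus:
  assumes F: "\<And>a. (\<Sum>k\<in>S. sqnorm d (mvec d (F k) a)) \<le> \<beta> * sqnorm d a" and "\<beta> \<ge> 0"
    and Y: "sform_bounded d Y c" and "c \<ge> 0"
  shows "cmod (\<Sum>k\<in>S. sform d Y (mvec d (F k) a) (mvec d (F k) b)) \<le> c * \<beta> * sqrt (sqnorm d a) * sqrt (sqnorm d b)"
proof -
  have "cmod (\<Sum>k\<in>S. sform d Y (mvec d (F k) a) (mvec d (F k) b))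
      \<le> (\<Sum>k\<in>S. c * (sqrt (sqnorm d (mvec d (F k) a)) * sqrt (sqnorm d (mvec d (F k) b))))"
    using Y unfolding sform_bounded_def by (intro order.trans[OF norm_sum] sum_mono) (simp add: mult.assoc)
  also have "\<dots> \<le> c * (sqrt (\<Sum>k\<in>S. sqnorm d (mvec d (F k) a)) * sqrt (\<Sum>k\<in>S. sqnorm d (mvec d (F k) b)))"
    unfolding sum_distrib_left[symmetric]
    by (intro mult_left_mono sum_sqrt_mult_le) (auto simp: sqnorm_nonneg \<open>c \<ge> 0\<close>)
  also have "\<dots> \<le> c * (sqrt (\<beta> * sqnorm d a) * sqrt (\<beta> * sqnorm d b))"
    by (intro mult_left_mono mult_mono real_sqrt_le_mono F)
      (auto simp: sqnorm_nonneg \<open>c \<ge> 0\<close> \<open>\<beta> \<ge> 0\<close> intro!: sum_nonneg)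
  also have "\<dots> = c * \<beta> * sqrt (sqnorm d a) * sqrt (sqnorm d b)"
    using \<open>\<beta> \<ge> 0\<close> by (simp add: real_sqrt_mult mult_ac)
  finally show ?thesis .
qed

lemma sform_bounded_kraus_perturbed:
  assumes F: "\<And>a. (\<Sum>k\<in>S. sqnorm d (mvec d (F k) a)) \<le> \<beta> * sqnorm d a" and "\<beta> \<ge> 0"
    and eq: "\<And>a b. (\<Sum>k\<in>S. sform d Y (mvec d (F k) a) (mvec d (F k) b))
      = \<kappa> * sform d Y a b + complex_of_real s * sform d Y (mvec d K a) (mvec d K b)"
    and "s \<ge> 0" "\<kappa> \<noteq> 0" and Y: "sform_bounded d Y c" and "c \<ge> 0"
  shows "sform_bounded d Y ((\<beta> + s * frobenius_sq d K) / cmod \<kappa> * c)"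
  unfolding sform_bounded_def
proof (intro allI)
  fix a b
  let ?n = "sqrt (sqnorm d a) * sqrt (sqnorm d b)"
  have K: "(\<Sum>k\<in>{0}. sqnorm d (mvec d ((\<lambda>_. K) k) a)) \<le> frobenius_sq d K * sqnorm d a" for a
    by (simp add: sqnorm_mvec_le_frobenius)
  have "cmod \<kappa> * cmod (sform d Y a b)
      \<le> cmod (\<Sum>k\<in>S. sform d Y (mvec d (F k) a) (mvec d (F k) b)) + s * cmod (sform d Y (mvec d K a) (mvec d K b))"
    using norm_triangle_ineq4[of "\<Sum>k\<in>S. sform d Y (mvec d (F k) a) (mvec d (F k) b)"
        "complex_of_real s * sform d Y (mvec d K a) (mvec d K b)"] \<open>s \<ge> 0\<close>
    unfolding eq by (simp add: norm_mult)
  also have "\<dots> \<le> c * \<beta> * ?n + s * (c * frobenius_sq d K * ?n)"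
    using sform_bounded_kraus[OF F \<open>\<beta> \<ge> 0\<close> Y \<open>c \<ge> 0\<close>, of a b]
      sform_bounded_kraus[OF K frobenius_sq_nonneg Y \<open>c \<ge> 0\<close>, of a b] \<open>s \<ge> 0\<close>
    by (intro add_mono mult_left_mono) (auto simp: mult.assoc)
  finally have "cmod \<kappa> * cmod (sform d Y a b) \<le> (\<beta> + s * frobenius_sq d K) * c * ?n"
    by (simp add: algebra_simps)
  thus "cmod (sform d Y a b) \<le> (\<beta> + s * frobenius_sq d K) / cmod \<kappa> * c * sqrt (sqnorm d a) * sqrt (sqnorm d b)"
    using \<open>\<kappa> \<noteq> 0\<close> by (simp add: field_simps)
qed

lemma sform_bounded_contraction_imp_zero:
  assumes step: "\<And>c. c \<ge> 0 \<Longrightarrow> sform_bounded d Y c \<Longrightarrow> sform_bounded d Y (q * c)"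
    and q: "0 \<le> q" "q < 1" and ij: "i < d" "j < d"
  shows "Y $$ (i,j) = 0"
proof -
  define c0 where "c0 = (\<Sum>i<d. \<Sum>j<d. cmod (Y $$ (i,j)))"
  have "c0 \<ge> 0" unfolding c0_def by (intro sum_nonneg) auto
  have "sform_bounded d Y (q^k * c0)" for k
  proof (induction k)
    case 0 show ?case using sform_bounded_entry_sum by (simp add: c0_def)
  next
    case (Suc k) thus ?case using step[of "q^k * c0"] q \<open>c0 \<ge> 0\<close> by (simp add: mult.assoc)
  qed
  hence le: "cmod (Y $$ (i,j)) \<le> q^k * c0" for k using sform_bounded_entry ij by blast
  have "(\<lambda>k. q^k * c0) \<longlonglongrightarrow> 0 * c0" by (intro tendsto_mult LIMSEQ_power_zero tendsto_const) (use q in auto)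
  hence "cmod (Y $$ (i,j)) \<le> 0" using le by (intro LIMSEQ_le_const) auto
  thus ?thesis by simp
qed

section \<open>Growth of matrix powers\<close>

lemma spectral_radius_nonneg: assumes "A \<in> carrier_mat n n" "n > 0" shows "spectral_radius A \<ge> 0"
proof -
  obtain \<nu> where "spectral_radius A = cmod \<nu>" using spectral_radius_mem_max(1)[OF assms] by auto
  thus ?thesis by simp
qed

lemma pow_mat_Suc_left: assumes "A \<in> carrier_mat n n" shows "A ^\<^sub>m Suc k = A * A ^\<^sub>m k"
proof (induction k)
  case (Suc k)
  have "A ^\<^sub>m Suc (Suc k) = (A * A ^\<^sub>m k) * A" using Suc by simp
  also have "\<dots> = A * (A ^\<^sub>m k * A)" using assms by (intro assoc_mult_mat[of _ n n]) auto
  finally show ?case by simp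
qed (use assms in simp)

lemma pow_mat_smult: fixes A :: "'a :: comm_ring_1 mat" assumes "A \<in> carrier_mat n n"
  shows "(a \<cdot>\<^sub>m A) ^\<^sub>m k = (a ^ k) \<cdot>\<^sub>m (A ^\<^sub>m k)"
proof (induction k)
  case 0 thus ?case using assms by (intro eq_matI) auto
next
  case (Suc k)
  have "(a \<cdot>\<^sub>m A) ^\<^sub>m Suc k = ((a ^ k) \<cdot>\<^sub>m (A ^\<^sub>m k)) * (a \<cdot>\<^sub>m A)" using Suc by simp
  also have "\<dots> = (a ^ k) \<cdot>\<^sub>m (A ^\<^sub>m k * (a \<cdot>\<^sub>m A))" by (rule mult_smult_assoc_mat) (use assms in auto)
  also have "\<dots> = (a ^ k) \<cdot>\<^sub>m (a \<cdot>\<^sub>m (A ^\<^sub>m k * A))" using assms by (subst mult_smult_distrib[of _ n n]) auto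
  also have "\<dots> = (a ^ Suc k) \<cdot>\<^sub>m (A ^\<^sub>m Suc k)" by (intro eq_matI) auto
  finally show ?case .
qed

lemma eigenvector_smult_mat: assumes A: "A \<in> carrier_mat n n" and ev: "eigenvector A v \<mu>"
  shows "eigenvector (c \<cdot>\<^sub>m A) v (c * \<mu>)"
proof -
  from ev A have v: "v \<in> carrier_vec n" "v \<noteq> 0\<^sub>v n" and Av: "A *\<^sub>v v = \<mu> \<cdot>\<^sub>v v"
    unfolding eigenvector_def by auto
  have "(c \<cdot>\<^sub>m A) *\<^sub>v v = (c * \<mu>) \<cdot>\<^sub>v v"
  proof (rule eq_vecI)
    fix i assume "i < dim_vec ((c * \<mu>) \<cdot>\<^sub>v v)"
    hence i: "i < n" using v by simp
    have "((c \<cdot>\<^sub>m A) *\<^sub>v v) $ i = c * (A *\<^sub>v v) $ i"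
      using A v i by (simp add: scalar_prod_def sum_distrib_left mult.assoc)
    thus "((c \<cdot>\<^sub>m A) *\<^sub>v v) $ i = ((c * \<mu>) \<cdot>\<^sub>v v) $ i" using Av i v by simp
  qed (use A v in simp)
  thus ?thesis using A v unfolding eigenvector_def by simp
qed

lemma mat_pow_entry_bound:
  assumes R: "R \<in> carrier_mat n n" and sr: "spectral_radius R < r"
  shows "\<exists>c. \<forall>k i j. i < n \<longrightarrow> j < n \<longrightarrow> cmod ((R ^\<^sub>m k) $$ (i,j)) \<le> c * r ^ k"
proof (cases "n = 0")
  case False
  hence r: "r > 0" using spectral_radius_nonneg[OF R] sr by simp
  define S where "S = complex_of_real (1/r) \<cdot>\<^sub>m R"
  have S: "S \<in> carrier_mat n n" unfolding S_def using R by simp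
  have RS: "R = complex_of_real r \<cdot>\<^sub>m S" unfolding S_def using R r by (intro eq_matI) auto
  have "spectral_radius S < 1"
  proof -
    obtain \<nu> where "\<nu> \<in> spectrum S" and eq: "spectral_radius S = cmod \<nu>"
      using spectral_radius_mem_max(1)[OF S] False by auto
    then obtain v where "eigenvector S v \<nu>" unfolding spectrum_def eigenvalue_def by auto
    hence "eigenvector R v (complex_of_real r * \<nu>)" unfolding RS by (rule eigenvector_smult_mat[OF S])
    hence "complex_of_real r * \<nu> \<in> spectrum R" unfolding spectrum_def eigenvalue_def by auto
    hence "cmod (complex_of_real r * \<nu>) \<le> spectral_radius R"
      using False by (intro spectral_radius_mem_max(2)[OF R]) auto
    hence "cmod (complex_of_real r * \<nu>) < r" using sr by simp
    thus ?thesis using r eq by (simp add: norm_mult)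
  qed
  from spectral_radius_jnf_norm_bound_less_1_upper_triangular[OF S this]
  obtain c where c: "\<And>k. norm_bound (S ^\<^sub>m k) c" by auto
  have "cmod ((R ^\<^sub>m k) $$ (i,j)) \<le> c * r ^ k" if ij: "i < n" "j < n" for k i j
  proof -
    have "(R ^\<^sub>m k) $$ (i,j) = complex_of_real (r ^ k) * (S ^\<^sub>m k) $$ (i,j)"
      unfolding RS pow_mat_smult[OF S] using ij S by simp
    hence "cmod ((R ^\<^sub>m k) $$ (i,j)) = r ^ k * cmod ((S ^\<^sub>m k) $$ (i,j))"
      using r by (simp add: norm_mult norm_power)
    also have "\<dots> \<le> r ^ k * c"
      using c[of k] ij S r unfolding norm_bound_def by (intro mult_left_mono) auto
    finally show ?thesis by (simp add: mult.commute)
  qed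
  thus ?thesis by blast
qed simp

lemma mvec_pow_bound:
  assumes "R \<in> carrier_mat n n" and "spectral_radius R < r"
  shows "\<exists>c. \<forall>k i. i < n \<longrightarrow> cmod (mvec n (R ^\<^sub>m k) a i) \<le> c * r ^ k"
proof -
  obtain c where c: "\<And>k i j. i < n \<Longrightarrow> j < n \<Longrightarrow> cmod ((R ^\<^sub>m k) $$ (i,j)) \<le> c * r ^ k"
    using mat_pow_entry_bound[OF assms] by blast
  have "cmod (mvec n (R ^\<^sub>m k) a i) \<le> (\<Sum>j<n. cmod (a j)) * c * r ^ k" if "i < n" for k i
  proof -
    have "cmod (mvec n (R ^\<^sub>m k) a i) \<le> (\<Sum>j<n. cmod ((R ^\<^sub>m k) $$ (i,j) * a j))"
      unfolding mvec_def by (rule norm_sum)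
    also have "\<dots> \<le> (\<Sum>j<n. c * r ^ k * cmod (a j))"
      by (intro sum_mono) (auto simp: norm_mult intro!: mult_right_mono c that)
    finally show ?thesis by (simp add: sum_distrib_left sum_distrib_right mult_ac)
  qed
  thus ?thesis by blast
qed

lemma pow_le_mult_pow_imp_le:
  fixes l r c :: real assumes "\<And>k. l ^ k \<le> c * r ^ k" "0 < r" shows "l \<le> r"
proof (rule ccontr)
  assume "\<not> l \<le> r"
  hence "l / r > 1" using assms(2) by simp
  then obtain k where k: "c < (l / r) ^ k" using real_arch_pow by blast
  have "(l / r) ^ k \<le> c" using assms(1)[of k] assms(2) by (simp add: power_divide divide_le_eq)
  with k show False by simp
qed

section \<open>Hermitian matrices\<close>

definition hermitian_mat :: "nat \<Rightarrow> complex mat \<Rightarrow> bool" where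
  "hermitian_mat d X \<longleftrightarrow> (\<forall>i<d. \<forall>j<d. X $$ (i,j) = cnj (X $$ (j,i)))"

lemma hermitian_mat_one: "hermitian_mat d (1\<^sub>m d)"
  unfolding hermitian_mat_def by simp

lemma hermitian_mat_inner_swap: assumes "hermitian_mat d X"
  shows "(\<Sum>i<d. cnj (mvec d X u i) * w i) = (\<Sum>i<d. cnj (u i) * mvec d X w i)"
proof -
  have X: "cnj (X $$ (i,j)) = X $$ (j,i)" if "i < d" "j < d" for i j
    using assms that unfolding hermitian_mat_def by (metis complex_cnj_cnj)
  have "(\<Sum>i<d. cnj (mvec d X u i) * w i) = (\<Sum>i<d. \<Sum>j<d. cnj (u j) * X $$ (j,i) * w i)"
    unfolding mvec_def cnj_sum sum_distrib_right by (intro sum.cong refl) (simp add: X mult_ac)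
  also have "\<dots> = (\<Sum>j<d. \<Sum>i<d. cnj (u j) * X $$ (j,i) * w i)" by (rule sum.swap)
  also have "\<dots> = (\<Sum>i<d. cnj (u i) * mvec d X w i)"
    unfolding mvec_def by (simp add: sum_distrib_left mult.assoc)
  finally show ?thesis .
qed

lemma cnj_sform_hermitian: assumes "hermitian_mat d X" shows "cnj (sform d X a b) = sform d X b a"
proof -
  have "cnj (sform d X a b) = (\<Sum>i<d. cnj (mvec d X b i) * a i)"
    unfolding sform_eq_inner_mvec by (simp add: mult.commute)
  also have "\<dots> = sform d X b a" unfolding sform_eq_inner_mvec by (rule hermitian_mat_inner_swap[OF assms])
  finally show ?thesis .
qed

lemma hermitian_eigenvalue_real:
  assumes X: "X \<in> carrier_mat d d" and h: "hermitian_mat d X" and ev: "eigenvector X v \<mu>"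
  shows "\<mu> = complex_of_real (Re \<mu>)"
proof -
  have "sform d X (($) v) (($) v) = \<mu> * complex_of_real (sqnorm d (($) v))"
    unfolding sform_eigenvector[OF X ev] sform_one_self ..
  moreover have "sqnorm d (($) v) > 0" by (rule sqnorm_eigenvector_pos[OF X ev])
  ultimately have "cnj \<mu> = \<mu>" using cnj_sform_hermitian[OF h, of "($) v" "($) v"] by simp
  hence "Im (cnj \<mu>) = Im \<mu>" by simp
  hence "Im \<mu> = 0" by simp
  thus ?thesis by (simp add: complex_eq_iff)
qed

lemma sqnorm_mvec_sq_le: assumes "hermitian_mat d X"
  shows "(sqnorm d (mvec d X u))\<^sup>2 \<le> sqnorm d u * sqnorm d (mvec d X (mvec d X u))"
proof -
  have "complex_of_real (sqnorm d (mvec d X u)) = (\<Sum>i<d. cnj (u i) * mvec d X (mvec d X u) i)"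
    unfolding sqnorm_eq_inner by (rule hermitian_mat_inner_swap[OF assms])
  hence "sqnorm d (mvec d X u) = cmod (\<Sum>i<d. cnj (u i) * mvec d X (mvec d X u) i)"
    by (metis norm_of_real abs_of_nonneg sqnorm_nonneg)
  also have "\<dots> \<le> sqrt (sqnorm d u) * sqrt (sqnorm d (mvec d X (mvec d X u)))"
    by (rule inner_cauchy_schwarz)
  finally have "sqnorm d (mvec d X u) \<le> sqrt (sqnorm d u) * sqrt (sqnorm d (mvec d X (mvec d X u)))" .
  hence "(sqnorm d (mvec d X u))\<^sup>2 \<le> (sqrt (sqnorm d u) * sqrt (sqnorm d (mvec d X (mvec d X u))))\<^sup>2"
    by (intro power_mono) (auto simp: sqnorm_nonneg)
  thus ?thesis by (simp add: power_mult_distrib sqnorm_nonneg)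
qed

lemma log_convex_geometric_lower:
  fixes s :: "nat \<Rightarrow> real"
  assumes nonneg: "\<And>k. s k \<ge> 0" and log_convex: "\<And>k. (s (Suc k))\<^sup>2 \<le> s k * s (Suc (Suc k))"
    and "s 0 > 0"
  shows "(s 1 / s 0) ^ k * s 0 \<le> s k"
proof -
  define t where "t = s 1 / s 0"
  have "t \<ge> 0" unfolding t_def using nonneg \<open>s 0 > 0\<close> by simp
  have step: "t * s k \<le> s (Suc k)" for k
  proof (induction k)
    case 0 thus ?case using \<open>s 0 > 0\<close> unfolding t_def by simp
  next
    case (Suc k)
    show ?case
    proof (cases "s k = 0")
      case True
      hence "s (Suc k) = 0" using log_convex[of k] by simp
      thus ?thesis using Suc nonneg[of "Suc (Suc k)"] by simp
    next
      case False
      hence sk: "s k > 0" using nonneg[of k] by simp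
      have "s k * (t * s (Suc k)) \<le> s (Suc k) * s (Suc k)"
        using mult_right_mono[OF Suc nonneg[of "Suc k"]] by (simp add: mult_ac)
      also have "\<dots> \<le> s k * s (Suc (Suc k))" using log_convex[of k] by (simp add: power2_eq_square)
      finally show ?thesis using sk by simp
    qed
  qed
  show ?thesis unfolding t_def[symmetric]
  proof (induction k)
    case (Suc k)
    have "t ^ Suc k * s 0 \<le> t * s k" using Suc \<open>t \<ge> 0\<close> by (simp add: mult.assoc mult_left_mono)
    thus ?case using step[of k] by simp
  qed simp
qed

lemma log_convex_first_ratio_le:
  fixes s :: "nat \<Rightarrow> real"
  assumes nonneg: "\<And>k. s k \<ge> 0" and log_convex: "\<And>k. (s (Suc k))\<^sup>2 \<le> s k * s (Suc (Suc k))"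
    and growth: "\<And>r. r > \<rho> \<Longrightarrow> \<exists>c. \<forall>k. s k \<le> c * r ^ k" and "\<rho> \<ge> 0"
  shows "s 1 \<le> \<rho> * s 0"
proof (cases "s 0 = 0")
  case True
  have "(s 1)\<^sup>2 \<le> 0" using log_convex[of 0] True by simp
  thus ?thesis using True by simp
next
  case False
  hence s0: "s 0 > 0" using nonneg[of 0] by simp
  have "s 1 / s 0 \<le> r" if r: "r > \<rho>" for r
  proof -
    obtain c where "\<And>k. s k \<le> c * r ^ k" using growth[OF r] by blast
    hence "(s 1 / s 0) ^ k * s 0 \<le> c * r ^ k" for k
      using log_convex_geometric_lower[OF nonneg log_convex s0, of k] by (meson order_trans)
    hence "(s 1 / s 0) ^ k \<le> (c / s 0) * r ^ k" for k using s0 by (simp add: field_simps)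
    thus ?thesis by (rule pow_le_mult_pow_imp_le) (use r \<open>\<rho> \<ge> 0\<close> in linarith)
  qed
  hence "s 1 / s 0 \<le> \<rho>" by (rule dense_ge)
  thus ?thesis using s0 by (simp add: field_simps)
qed

text \<open>Without a spectral theorem at hand: \<open>k \<mapsto> |X\<^sup>k a|\<^sup>2\<close> is log-convex for Hermitian \<open>X\<close>
and grows like \<open>r\<^sup>2\<^sup>k\<close> for every \<open>r > \<rho>(X)\<close>, so its first ratio \<open>|X a|\<^sup>2 / |a|\<^sup>2\<close> is at most
\<open>\<rho>(X)\<^sup>2\<close>.\<close>

lemma sqnorm_mvec_hermitian_le:
  assumes X: "X \<in> carrier_mat d d" and h: "hermitian_mat d X" and d: "d > 0"
  shows "sqnorm d (mvec d X a) \<le> (spectral_radius X)\<^sup>2 * sqnorm d a"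
proof -
  let ?\<rho> = "spectral_radius X"
  define x where "x k = mvec d (X ^\<^sub>m k) a" for k
  have x_Suc: "x (Suc k) j = mvec d X (x k) j" if "j < d" for k j
    unfolding x_def pow_mat_Suc_left[OF X] using mvec_mult[OF X _ that] X by simp
  have x0: "x 0 j = a j" if "j < d" for j unfolding x_def using X that by (simp add: mvec_one)
  have x1: "x 1 j = mvec d X a j" if "j < d" for j
    using x_Suc[OF that, of 0] mvec_cong[of d "x 0" a X j, OF x0] by simp
  have "sqnorm d (x 1) \<le> ?\<rho>\<^sup>2 * sqnorm d (x 0)"
  proof (rule log_convex_first_ratio_le[where s = "\<lambda>k. sqnorm d (x k)"])
    fix k
    have "sqnorm d (x (Suc k)) = sqnorm d (mvec d X (x k))" by (intro sqnorm_cong x_Suc)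
    moreover have "sqnorm d (x (Suc (Suc k))) = sqnorm d (mvec d X (mvec d X (x k)))"
      by (intro sqnorm_cong, subst x_Suc, assumption, intro mvec_cong x_Suc)
    ultimately show "(sqnorm d (x (Suc k)))\<^sup>2 \<le> sqnorm d (x k) * sqnorm d (x (Suc (Suc k)))"
      using sqnorm_mvec_sq_le[OF h, of "x k"] by simp
  next
    fix r assume "r > ?\<rho>\<^sup>2"
    hence r: "r \<ge> 0" "sqrt r > ?\<rho>"
      by (meson less_imp_le order_trans zero_le_power2, rule real_less_rsqrt)
    then obtain c where c: "\<And>k i. i < d \<Longrightarrow> cmod (x k i) \<le> c * sqrt r ^ k"
      using mvec_pow_bound[OF X] unfolding x_def by blast
    have "sqnorm d (x k) \<le> (real d * c\<^sup>2) * r ^ k" for k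
    proof -
      have "sqnorm d (x k) \<le> (\<Sum>i<d. (c * sqrt r ^ k)\<^sup>2)"
        unfolding sqnorm_def by (intro sum_mono power_mono) (auto simp: c)
      also have "(c * sqrt r ^ k)\<^sup>2 = c\<^sup>2 * r ^ k"
        using r(1) by (simp add: power_mult_distrib power2_eq_square power_mult_distrib[symmetric])
      finally show ?thesis by simp
    qed
    thus "\<exists>c. \<forall>k. sqnorm d (x k) \<le> c * r ^ k" by blast
  qed (auto simp: sqnorm_nonneg spectral_radius_nonneg[OF X d])
  moreover have "sqnorm d (x 0) = sqnorm d a" by (intro sqnorm_cong x0)
  moreover have "sqnorm d (x 1) = sqnorm d (mvec d X a)" by (intro sqnorm_cong x1)
  ultimately show ?thesis by simp
qed

lemma sform_hermitian_le:
  assumes X: "X \<in> carrier_mat d d" and h: "hermitian_mat d X" and d: "d > 0"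
  shows "cmod (sform d X a a) \<le> spectral_radius X * sqnorm d a"
proof -
  have "cmod (sform d X a a) \<le> sqrt (sqnorm d a) * sqrt (sqnorm d (mvec d X a))"
    unfolding sform_eq_inner_mvec by (rule inner_cauchy_schwarz)
  also have "\<dots> \<le> sqrt (sqnorm d a) * sqrt ((spectral_radius X)\<^sup>2 * sqnorm d a)"
    by (intro mult_left_mono real_sqrt_le_mono sqnorm_mvec_hermitian_le[OF X h d]) (auto simp: sqnorm_nonneg)
  also have "\<dots> = spectral_radius X * sqnorm d a"
    using spectral_radius_nonneg[OF X d] sqnorm_nonneg[of d a] by (simp add: real_sqrt_mult)
  finally show ?thesis .
qed

lemma spectral_min_re_le: assumes "X \<in> carrier_mat d d" "\<mu> \<in> spectrum X"
  shows "spectral_min_re X \<le> Re \<mu>"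
  unfolding spectral_min_re_def using card_finite_spectrum(1)[OF assms(1)] assms(2) by (intro Min_le) auto

lemma le_spectral_abscissa: assumes "X \<in> carrier_mat d d" "\<mu> \<in> spectrum X"
  shows "Re \<mu> \<le> spectral_abscissa X"
  unfolding spectral_abscissa_def using card_finite_spectrum(1)[OF assms(1)] assms(2) by (intro Max_ge) auto

lemma spectral_min_re_mem: assumes "X \<in> carrier_mat d d" "d > 0"
  shows "spectral_min_re X \<in> Re ` spectrum X"
  unfolding spectral_min_re_def
  using card_finite_spectrum(1)[OF assms(1)] spectrum_non_empty[OF assms] by (intro Min_in) auto

text \<open>\<open>\<sigma> X + s I\<close>, used with \<open>\<sigma> = \<plusminus>1\<close> to move the spectrum of a Hermitian \<open>X\<close> into \<open>[0, \<alpha> - \<varrho>]\<close>.\<close>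

definition shift_scale_mat :: "nat \<Rightarrow> real \<Rightarrow> real \<Rightarrow> complex mat \<Rightarrow> complex mat" where
  "shift_scale_mat d \<sigma> s X =
     mat d d (\<lambda>(i,j). complex_of_real \<sigma> * X $$ (i,j) + (if i = j then complex_of_real s else 0))"

lemma shift_scale_mat_carrier: "shift_scale_mat d \<sigma> s X \<in> carrier_mat d d"
  unfolding shift_scale_mat_def by simp

lemma hermitian_shift_scale_mat: assumes "hermitian_mat d X" shows "hermitian_mat d (shift_scale_mat d \<sigma> s X)"
  unfolding hermitian_mat_def
proof (intro allI impI)
  fix i j assume ij: "i < d" "j < d"
  hence "X $$ (i,j) = cnj (X $$ (j,i))" using assms unfolding hermitian_mat_def by blast
  thus "shift_scale_mat d \<sigma> s X $$ (i,j) = cnj (shift_scale_mat d \<sigma> s X $$ (j,i))"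
    unfolding shift_scale_mat_def using ij by simp
qed

lemma mvec_shift_scale_mat: assumes "i < d"
  shows "mvec d (shift_scale_mat d \<sigma> s X) u i = complex_of_real \<sigma> * mvec d X u i + complex_of_real s * u i"
proof -
  have "mvec d (shift_scale_mat d \<sigma> s X) u i
      = (\<Sum>j<d. complex_of_real \<sigma> * X $$ (i,j) * u j + (if j = i then complex_of_real s * u j else 0))"
    unfolding mvec_def shift_scale_mat_def using assms by (intro sum.cong refl) (auto simp: distrib_right)
  thus ?thesis unfolding mvec_def using assms by (simp add: sum.distrib sum_distrib_left mult.assoc)
qed

lemma sform_shift_scale_mat:
  "sform d (shift_scale_mat d \<sigma> s X) a a = complex_of_real \<sigma> * sform d X a a + complex_of_real (s * sqnorm d a)"
proof -
  have "sform d (shift_scale_mat d \<sigma> s X) a a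
      = (\<Sum>i<d. complex_of_real \<sigma> * (cnj (a i) * mvec d X a i) + complex_of_real s * (cnj (a i) * a i))"
    unfolding sform_eq_inner_mvec by (intro sum.cong refl) (simp add: mvec_shift_scale_mat algebra_simps)
  also have "\<dots> = complex_of_real \<sigma> * sform d X a a + complex_of_real s * complex_of_real (sqnorm d a)"
    unfolding sform_eq_inner_mvec sqnorm_eq_inner by (simp add: sum.distrib sum_distrib_left)
  finally show ?thesis by simp
qed

lemma spectrum_shift_scale_mat:
  assumes X: "X \<in> carrier_mat d d" and "\<sigma> \<noteq> 0" and \<nu>: "\<nu> \<in> spectrum (shift_scale_mat d \<sigma> s X)"
  shows "\<exists>\<mu> \<in> spectrum X. \<nu> = complex_of_real \<sigma> * \<mu> + complex_of_real s"
proof -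
  let ?Y = "shift_scale_mat d \<sigma> s X"
  have Y: "?Y \<in> carrier_mat d d" by (rule shift_scale_mat_carrier)
  obtain w where ev: "eigenvector ?Y w \<nu>" using \<nu> unfolding spectrum_def eigenvalue_def by auto
  hence w: "w \<in> carrier_vec d" "w \<noteq> 0\<^sub>v d" using Y unfolding eigenvector_def by auto
  define \<mu> where "\<mu> = (\<nu> - complex_of_real s) / complex_of_real \<sigma>"
  have "mvec d X (($) w) i = \<mu> * w $ i" if i: "i < d" for i
  proof -
    have "complex_of_real \<sigma> * mvec d X (($) w) i = (\<nu> - complex_of_real s) * w $ i"
      using mvec_eigenvector[OF Y ev i] unfolding mvec_shift_scale_mat[OF i] by (simp add: algebra_simps)
    thus ?thesis unfolding \<mu>_def using \<open>\<sigma> \<noteq> 0\<close> by (simp add: field_simps)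
  qed
  hence "\<mu> \<in> spectrum X" by (rule mem_spectrum_of_mvec[OF X w])
  moreover have "\<nu> = complex_of_real \<sigma> * \<mu> + complex_of_real s" unfolding \<mu>_def using \<open>\<sigma> \<noteq> 0\<close> by simp
  ultimately show ?thesis by blast
qed

lemma sform_shift_scale_le:
  assumes X: "X \<in> carrier_mat d d" and h: "hermitian_mat d X" and d: "d > 0" and "\<sigma> \<noteq> 0"
    and bound: "\<And>\<mu>. \<mu> \<in> spectrum X \<Longrightarrow> 0 \<le> \<sigma> * Re \<mu> + s \<and> \<sigma> * Re \<mu> + s \<le> c"
  shows "cmod (sform d (shift_scale_mat d \<sigma> s X) a a) \<le> c * sqnorm d a"
proof -
  let ?Y = "shift_scale_mat d \<sigma> s X"
  have Y: "?Y \<in> carrier_mat d d" by (rule shift_scale_mat_carrier)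
  obtain \<nu> where \<nu>: "\<nu> \<in> spectrum ?Y" and eq: "spectral_radius ?Y = cmod \<nu>"
    using spectral_radius_mem_max(1)[OF Y d] by auto
  obtain \<mu> where \<mu>: "\<mu> \<in> spectrum X" and "\<nu> = complex_of_real \<sigma> * \<mu> + complex_of_real s"
    using spectrum_shift_scale_mat[OF X \<open>\<sigma> \<noteq> 0\<close> \<nu>] by blast
  moreover obtain v where "eigenvector X v \<mu>" using \<mu> unfolding spectrum_def eigenvalue_def by auto
  hence "\<mu> = complex_of_real (Re \<mu>)" by (rule hermitian_eigenvalue_real[OF X h])
  ultimately have "\<nu> = complex_of_real (\<sigma> * Re \<mu> + s)" by (metis of_real_add of_real_mult)
  hence "cmod \<nu> = \<sigma> * Re \<mu> + s" using bound[OF \<mu>] by (simp only: norm_of_real) simp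
  hence "spectral_radius ?Y \<le> c" using eq bound[OF \<mu>] by simp
  thus ?thesis
    using sform_hermitian_le[OF Y hermitian_shift_scale_mat[OF h] d, of a] sqnorm_nonneg[of d a]
    by (meson mult_right_mono order_trans)
qed

lemma hermitian_rayleigh:
  assumes X: "X \<in> carrier_mat d d" and h: "hermitian_mat d X" and d: "d > 0"
  shows "spectral_min_re X * sqnorm d a \<le> Re (sform d X a a)"
    and "Re (sform d X a a) \<le> spectral_abscissa X * sqnorm d a"
proof -
  let ?l = "spectral_min_re X" and ?u = "spectral_abscissa X"
  note bounds = spectral_min_re_le[OF X] le_spectral_abscissa[OF X]
  have "Re (sform d (shift_scale_mat d 1 (- ?l) X) a a) \<le> (?u - ?l) * sqnorm d a"
    by (rule order.trans[OF complex_Re_le_cmod sform_shift_scale_le[OF X h d]]) (use bounds in auto)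
  thus "Re (sform d X a a) \<le> ?u * sqnorm d a"
    unfolding sform_shift_scale_mat by (simp add: algebra_simps)
  have "Re (sform d (shift_scale_mat d (-1) ?u X) a a) \<le> (?u - ?l) * sqnorm d a"
    by (rule order.trans[OF complex_Re_le_cmod sform_shift_scale_le[OF X h d]]) (use bounds in auto)
  thus "?l * sqnorm d a \<le> Re (sform d X a a)"
    unfolding sform_shift_scale_mat by (simp add: algebra_simps)
qed

lemma hermitian_min_eigenvector:
  assumes X: "X \<in> carrier_mat d d" and h: "hermitian_mat d X" and d: "d > 0"
  obtains v where "eigenvector X v (complex_of_real (spectral_min_re X))"
proof -
  obtain \<mu> where \<mu>: "\<mu> \<in> spectrum X" and eq: "spectral_min_re X = Re \<mu>"
    using spectral_min_re_mem[OF X d] by auto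
  then obtain v where ev: "eigenvector X v \<mu>" unfolding spectrum_def eigenvalue_def by auto
  have "\<mu> = complex_of_real (spectral_min_re X)" using hermitian_eigenvalue_real[OF X h ev] eq by simp
  thus ?thesis using ev that by simp
qed

section \<open>Vectorisation and Kronecker products\<close>

text \<open>\<open>vec Y\<close> stores \<open>Y $$ (p,q)\<close> at index \<open>p * d + q\<close>; \<open>unvec\<close> inverts this.\<close>

definition unvec :: "nat \<Rightarrow> (nat \<Rightarrow> complex) \<Rightarrow> complex mat" where
  "unvec d z = mat d d (\<lambda>(p,q). z (p * d + q))"

definition sandwich :: "nat \<Rightarrow> complex mat \<Rightarrow> complex mat \<Rightarrow> complex mat \<Rightarrow> nat \<Rightarrow> nat \<Rightarrow> complex" where
  "sandwich d X Y Z i j = (\<Sum>p<d. \<Sum>q<d. cnj (X $$ (p,i)) * Y $$ (p,q) * Z $$ (q,j))"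

lemma unvec_carrier: "unvec d z \<in> carrier_mat d d"
  unfolding unvec_def by simp

lemma index_unvec: "i < d \<Longrightarrow> j < d \<Longrightarrow> unvec d z $$ (i,j) = z (i * d + j)"
  unfolding unvec_def by simp

lemma index_pair_less: assumes "p < d" "q < (d::nat)" shows "p * d + q < d * d"
proof -
  have "p * d + q < (p + 1) * d" using assms by simp
  also have "\<dots> \<le> d * d" using assms by (intro mult_le_mono1) simp
  finally show ?thesis .
qed

lemma div_mod_less_square: assumes "r < d * (d::nat)" shows "r div d < d" "r mod d < d"
  using assms by (auto simp: less_mult_imp_div_less)
    (metis mod_less_divisor mult_0_right not_gr0 not_less0)

lemma sum_lessThan_square: "(\<Sum>r<n * d. f r) = (\<Sum>p<n. \<Sum>q<d. f (p * d + q :: nat))"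
proof (induction n)
  case (Suc n)
  have shift: "(\<Sum>r<k + e. f r) = (\<Sum>r<k. f r) + (\<Sum>q<e. f (k + q))" for k e :: nat
    by (induction e) (auto simp: add.assoc)
  have "(\<Sum>r<Suc n * d. f r) = (\<Sum>r<n * d + d. f r)" by (simp add: add.commute)
  also have "\<dots> = (\<Sum>r<n * d. f r) + (\<Sum>q<d. f (n * d + q))" by (rule shift)
  finally show ?case using Suc by simp
qed simp

lemma unvec_nonzero: assumes "x \<in> carrier_vec (d * d)" "x \<noteq> 0\<^sub>v (d * d)"
  obtains i j where "i < d" "j < d" "unvec d (($) x) $$ (i,j) \<noteq> 0"
proof -
  obtain r where r: "r < d * d" "x $ r \<noteq> 0" using assms by (metis eq_vecI index_zero_vec carrier_vecD)
  have "r = (r div d) * d + r mod d" by simp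
  thus ?thesis using that r div_mod_less_square[OF r(1)] index_unvec[of "r div d" d "r mod d"] by metis
qed

lemma kron_carrier: "X \<in> carrier_mat d d \<Longrightarrow> Y \<in> carrier_mat d d \<Longrightarrow> kron X Y \<in> carrier_mat (d * d) (d * d)"
  unfolding kron_def by auto

lemma mat_conj_carrier: "X \<in> carrier_mat d d \<Longrightarrow> mat_conj X \<in> carrier_mat d d"
  unfolding mat_conj_def by auto

lemma dim_kron [simp]: "dim_row (kron X Y) = dim_row X * dim_row Y" "dim_col (kron X Y) = dim_col X * dim_col Y"
  unfolding kron_def by simp_all

lemma dim_mat_conj [simp]: "dim_row (mat_conj X) = dim_row X" "dim_col (mat_conj X) = dim_col X"
  unfolding mat_conj_def by simp_all

lemma dim_msum [simp]: "dim_row (msum n f K) = n" "dim_col (msum n f K) = n"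
  unfolding msum_def by simp_all

lemma mat_conj_one: "mat_conj (1\<^sub>m d) = 1\<^sub>m d"
  unfolding mat_conj_def by (intro eq_matI) auto

lemma msum_carrier: "msum n f K \<in> carrier_mat n n"
  unfolding msum_def by auto

lemma index_msum: "i < n \<Longrightarrow> j < n \<Longrightarrow> msum n f K $$ (i,j) = (\<Sum>k\<in>K. f k $$ (i,j))"
  unfolding msum_def by auto

lemma index_mat_adjoint: "X \<in> carrier_mat d d \<Longrightarrow> i < d \<Longrightarrow> j < d \<Longrightarrow> mat_adjoint X $$ (i,j) = cnj (X $$ (j,i))"
  unfolding mat_adjoint_def by (simp add: mat_of_rows_index)

lemma mat_adjoint_carrier: "X \<in> carrier_mat d d \<Longrightarrow> mat_adjoint X \<in> carrier_mat d d"
  unfolding mat_adjoint_def by auto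

lemma sum_kron_conj_column:
  assumes X: "X \<in> carrier_mat d d" and Z: "Z \<in> carrier_mat d d" and ij: "i < d" "j < d"
  shows "(\<Sum>c<d * d. kron (mat_conj X) Z $$ (c, i * d + j) * z c) = sandwich d X (unvec d z) Z i j"
proof -
  have "(\<Sum>c<d * d. kron (mat_conj X) Z $$ (c, i * d + j) * z c)
      = (\<Sum>p<d. \<Sum>q<d. kron (mat_conj X) Z $$ (p * d + q, i * d + j) * z (p * d + q))"
    by (rule sum_lessThan_square)
  also have "\<dots> = sandwich d X (unvec d z) Z i j"
    unfolding sandwich_def
  proof (intro sum.cong refl)
    fix p q assume "p \<in> {..<d}" "q \<in> {..<d}"
    hence pq: "p < d" "q < d" by auto
    have "kron (mat_conj X) Z $$ (p * d + q, i * d + j) = cnj (X $$ (p,i)) * Z $$ (q,j)"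
      using X Z ij pq index_pair_less[OF pq] index_pair_less[OF ij] by (simp add: kron_def mat_conj_def)
    thus "kron (mat_conj X) Z $$ (p * d + q, i * d + j) * z (p * d + q)
        = cnj (X $$ (p,i)) * unvec d z $$ (p,q) * Z $$ (q,j)"
      using pq by (simp add: index_unvec mult_ac)
  qed
  finally show ?thesis .
qed

lemma mvec_transpose: "X \<in> carrier_mat n n \<Longrightarrow> i < n \<Longrightarrow> mvec n (transpose_mat X) z i = (\<Sum>j<n. X $$ (j,i) * z j)"
  unfolding mvec_def by (intro sum.cong refl) auto

lemma sform_sandwich:
  "(\<Sum>i<d. \<Sum>j<d. cnj (a i) * sandwich d X Y Z i j * b j) = sform d Y (mvec d X a) (mvec d Z b)"
proof -
  have "sform d Y (mvec d X a) (mvec d Z b)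
      = (\<Sum>p<d. \<Sum>q<d. \<Sum>i<d. \<Sum>j<d. cnj (a i) * (cnj (X $$ (p,i)) * Y $$ (p,q) * Z $$ (q,j)) * b j)"
    unfolding sform_def mvec_def by (simp add: sum_distrib_left sum_distrib_right mult_ac)
  also have "\<dots> = (\<Sum>i<d. \<Sum>j<d. \<Sum>p<d. \<Sum>q<d. cnj (a i) * (cnj (X $$ (p,i)) * Y $$ (p,q) * Z $$ (q,j)) * b j)"
    by (rule sum_swap4)
  also have "\<dots> = (\<Sum>i<d. \<Sum>j<d. cnj (a i) * sandwich d X Y Z i j * b j)"
    unfolding sandwich_def by (intro sum.cong refl) (simp add: sum_distrib_left sum_distrib_right)
  finally show ?thesis by simp
qed

lemma sandwich_adjoint: assumes "Y \<in> carrier_mat d d" "i < d" "j < d"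
  shows "sandwich d X (mat_adjoint Y) Z i j = cnj (sandwich d Z Y X j i)"
proof -
  have "sandwich d X (mat_adjoint Y) Z i j = (\<Sum>p<d. \<Sum>q<d. cnj (X $$ (p,i)) * cnj (Y $$ (q,p)) * Z $$ (q,j))"
    unfolding sandwich_def using assms by (intro sum.cong refl) (simp add: index_mat_adjoint)
  also have "\<dots> = (\<Sum>q<d. \<Sum>p<d. cnj (X $$ (p,i)) * cnj (Y $$ (q,p)) * Z $$ (q,j))" by (rule sum.swap)
  also have "\<dots> = cnj (sandwich d Z Y X j i)" unfolding sandwich_def by (simp add: mult_ac)
  finally show ?thesis .
qed

lemma sandwich_cong: "(\<And>p q. p < d \<Longrightarrow> q < d \<Longrightarrow> X $$ (p,q) = Y $$ (p,q)) \<Longrightarrow> sandwich d F X G i j = sandwich d F Y G i j"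
  unfolding sandwich_def by (intro sum.cong refl) auto

lemma sandwich_one: assumes "i < d" "j < d"
  shows "sandwich d X (1\<^sub>m d) Z i j = (\<Sum>p<d. cnj (X $$ (p,i)) * Z $$ (p,j))"
  unfolding sandwich_def
proof (intro sum.cong refl)
  fix p assume p: "p \<in> {..<d}"
  have "(\<Sum>q<d. cnj (X $$ (p,i)) * 1\<^sub>m d $$ (p,q) * Z $$ (q,j)) = (\<Sum>q<d. if q = p then cnj (X $$ (p,i)) * Z $$ (q,j) else 0)"
    using p by (intro sum.cong refl) auto
  thus "(\<Sum>q<d. cnj (X $$ (p,i)) * 1\<^sub>m d $$ (p,q) * Z $$ (q,j)) = cnj (X $$ (p,i)) * Z $$ (p,j)"
    using p by simp
qed

lemma index_mult_square: assumes "X \<in> carrier_mat d d" "Y \<in> carrier_mat d d" "i < d" "j < d"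
  shows "(X * Y) $$ (i,j) = (\<Sum>l<d. X $$ (i,l) * Y $$ (l,j))"
  using assms by (simp add: scalar_prod_def atLeast0LessThan)

lemma index_adjoint_mult_self: assumes "X \<in> carrier_mat d d" "i < d" "j < d"
  shows "(mat_adjoint X * X) $$ (i,j) = sandwich d X (1\<^sub>m d) X i j"
  using assms by (simp add: index_mult_square[OF mat_adjoint_carrier] index_mat_adjoint sandwich_one)

lemma sform_add: "X \<in> carrier_mat d d \<Longrightarrow> Y \<in> carrier_mat d d \<Longrightarrow> sform d (X + Y) a b = sform d X a b + sform d Y a b"
  unfolding sform_def by (simp add: algebra_simps sum.distrib)

lemma sform_msum: "sform d (msum d f K) a b = (\<Sum>k\<in>K. sform d (f k) a b)"
proof -
  have "sform d (msum d f K) a b = (\<Sum>i<d. \<Sum>j<d. \<Sum>k\<in>K. cnj (a i) * f k $$ (i,j) * b j)"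
    unfolding sform_def by (intro sum.cong refl) (simp add: index_msum sum_distrib_left sum_distrib_right)
  also have "\<dots> = (\<Sum>k\<in>K. sform d (f k) a b)" unfolding sform_def by (rule sum_swap3[symmetric])
  finally show ?thesis .
qed

lemma sform_adjoint: assumes "X \<in> carrier_mat d d" shows "sform d (mat_adjoint X) a b = cnj (sform d X b a)"
proof -
  have "sform d (mat_adjoint X) a b = (\<Sum>i<d. \<Sum>j<d. cnj (a i) * cnj (X $$ (j,i)) * b j)"
    unfolding sform_def using assms by (intro sum.cong refl) (simp add: index_mat_adjoint)
  also have "\<dots> = (\<Sum>j<d. \<Sum>i<d. cnj (a i) * cnj (X $$ (j,i)) * b j)" by (rule sum.swap)
  also have "\<dots> = cnj (sform d X b a)" unfolding sform_def by (simp add: mult_ac)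
  finally show ?thesis .
qed

lemma sform_adjoint_mult_self: assumes "X \<in> carrier_mat d d"
  shows "sform d (mat_adjoint X * X) a a = complex_of_real (sqnorm d (mvec d X a))"
proof -
  have "sform d (mat_adjoint X * X) a a = (\<Sum>i<d. \<Sum>j<d. cnj (a i) * sandwich d X (1\<^sub>m d) X i j * a j)"
    unfolding sform_def using assms by (intro sum.cong refl) (simp add: index_adjoint_mult_self)
  also have "\<dots> = sform d (1\<^sub>m d) (mvec d X a) (mvec d X a)" by (rule sform_sandwich)
  finally show ?thesis by (simp add: sform_one_self)
qed

lemma hermitian_mat_add: assumes "hermitian_mat d X" "hermitian_mat d Y" "X \<in> carrier_mat d d" "Y \<in> carrier_mat d d"
  shows "hermitian_mat d (X + Y)"
  unfolding hermitian_mat_def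
proof (intro allI impI)
  fix i j assume ij: "i < d" "j < d"
  have "X $$ (i,j) = cnj (X $$ (j,i))" "Y $$ (i,j) = cnj (Y $$ (j,i))"
    using assms(1,2) ij unfolding hermitian_mat_def by blast+
  thus "(X + Y) $$ (i,j) = cnj ((X + Y) $$ (j,i))" using assms(3,4) ij by simp
qed

lemma hermitian_mat_msum: assumes "\<And>k. k \<in> K \<Longrightarrow> hermitian_mat n (f k)" shows "hermitian_mat n (msum n f K)"
  unfolding hermitian_mat_def
proof (intro allI impI)
  fix i j assume ij: "i < n" "j < n"
  have "f k $$ (i,j) = cnj (f k $$ (j,i))" if "k \<in> K" for k
    using assms[OF that] ij unfolding hermitian_mat_def by blast
  thus "msum n f K $$ (i,j) = cnj (msum n f K $$ (j,i))"
    unfolding index_msum[OF ij] index_msum[OF ij(2,1)] cnj_sum by (intro sum.cong refl) simp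
qed

lemma hermitian_adjoint_mult_self: assumes "X \<in> carrier_mat d d" shows "hermitian_mat d (mat_adjoint X * X)"
  unfolding hermitian_mat_def
proof (intro allI impI)
  fix i j assume "i < d" "j < d"
  thus "(mat_adjoint X * X) $$ (i,j) = cnj ((mat_adjoint X * X) $$ (j,i))"
    using assms by (simp add: index_adjoint_mult_self sandwich_one mult.commute)
qed

lemma hermitian_add_adjoint: assumes "X \<in> carrier_mat d d" shows "hermitian_mat d (X + mat_adjoint X)"
  unfolding hermitian_mat_def
proof (intro allI impI)
  fix i j assume ij: "i < d" "j < d"
  have "(X + mat_adjoint X) $$ (i,j) = X $$ (i,j) + cnj (X $$ (j,i))"
    "(X + mat_adjoint X) $$ (j,i) = X $$ (j,i) + cnj (X $$ (i,j))"
    using assms ij mat_adjoint_carrier[OF assms] by (simp_all add: index_mat_adjoint)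
  thus "(X + mat_adjoint X) $$ (i,j) = cnj ((X + mat_adjoint X) $$ (j,i))" by (simp add: add.commute)
qed

section \<open>The matrices of the theorem\<close>

locale kraus_system =
  fixes A :: "complex mat" and B :: "nat \<Rightarrow> complex mat" and d m :: nat
  assumes A_carrier: "A \<in> carrier_mat d d"
    and B_carrier: "\<And>k. k \<in> {1..m} \<Longrightarrow> B k \<in> carrier_mat d d"
begin

definition kraus_op :: "nat \<Rightarrow> complex mat" where
  "kraus_op k = (if k = 0 then A else B k)"

definition mat_D :: "complex mat" where
  "mat_D = kron (mat_conj A) A + msum (d * d) (\<lambda>k. kron (mat_conj (B k)) (B k)) {1..m}"

definition mat_C :: "complex mat" where
  "mat_C = kron (mat_conj A) (1\<^sub>m d) + kron (1\<^sub>m d) A + msum (d * d) (\<lambda>k. kron (mat_conj (B k)) (B k)) {1..m}"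

definition mat_N :: "complex mat" where
  "mat_N = mat_adjoint A * A + msum d (\<lambda>k. mat_adjoint (B k) * B k) {1..m}"

definition mat_M :: "complex mat" where
  "mat_M = A + mat_adjoint A + msum d (\<lambda>k. mat_adjoint (B k) * B k) {1..m}"

text \<open>Entry \<open>(i,j)\<close> of \<open>A\<^sup>* Y + Y A + \<Sum>\<^sub>k B\<^sub>k\<^sup>* Y B\<^sub>k\<close>, the map that \<open>C\<^sup>T\<close> induces on matrices.\<close>

definition lindblad_dual :: "complex mat \<Rightarrow> nat \<Rightarrow> nat \<Rightarrow> complex" where
  "lindblad_dual Y i j = sandwich d A Y (1\<^sub>m d) i j + sandwich d (1\<^sub>m d) Y A i j
     + (\<Sum>k\<in>{1..m}. sandwich d (B k) Y (B k) i j)"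

lemma sum_atLeast0_atMost: "(\<Sum>k\<in>{0..m}. f k) = f 0 + (\<Sum>k\<in>{1..m}. f k)"
  by (simp add: sum.atLeast_Suc_atMost)

lemma mat_D_carrier: "mat_D \<in> carrier_mat (d * d) (d * d)"
  unfolding mat_D_def using A_carrier by (intro add_carrier_mat kron_carrier mat_conj_carrier msum_carrier)

lemma mat_C_carrier: "mat_C \<in> carrier_mat (d * d) (d * d)"
  unfolding mat_C_def using A_carrier
  by (intro add_carrier_mat kron_carrier mat_conj_carrier msum_carrier one_carrier_mat)

lemma mat_N_carrier: "mat_N \<in> carrier_mat d d"
  unfolding mat_N_def using A_carrier by (intro add_carrier_mat mult_carrier_mat mat_adjoint_carrier msum_carrier)

lemma mat_M_carrier: "mat_M \<in> carrier_mat d d"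
  unfolding mat_M_def using A_carrier by (intro add_carrier_mat mat_adjoint_carrier msum_carrier)

lemma mat_N_hermitian: "hermitian_mat d mat_N"
  unfolding mat_N_def using A_carrier B_carrier mat_adjoint_carrier[OF A_carrier]
  by (intro hermitian_mat_add hermitian_mat_msum hermitian_adjoint_mult_self msum_carrier mult_carrier_mat
      mat_adjoint_carrier) auto

lemma mat_M_hermitian: "hermitian_mat d mat_M"
  unfolding mat_M_def using A_carrier B_carrier mat_adjoint_carrier[OF A_carrier]
  by (intro hermitian_mat_add hermitian_mat_msum hermitian_add_adjoint hermitian_adjoint_mult_self
      msum_carrier add_carrier_mat mat_adjoint_carrier) (auto simp: mat_adjoint_carrier)

lemma sum_kron_column_msum: assumes "r < d * d"
  shows "(\<Sum>c<d * d. msum (d * d) (\<lambda>k. kron (mat_conj (B k)) (B k)) {1..m} $$ (c, r) * z c)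
    = (\<Sum>k\<in>{1..m}. \<Sum>c<d * d. kron (mat_conj (B k)) (B k) $$ (c, r) * z c)"
  using assms by (simp add: index_msum sum_distrib_right sum.swap[of _ "{..<d * d}"])

lemma mvec_transpose_D: assumes ij: "i < d" "j < d"
  shows "mvec (d * d) (transpose_mat mat_D) z (i * d + j)
    = (\<Sum>k\<in>{0..m}. sandwich d (kraus_op k) (unvec d z) (kraus_op k) i j)"
proof -
  let ?r = "i * d + j"
  have r: "?r < d * d" by (rule index_pair_less[OF ij])
  have "mvec (d * d) (transpose_mat mat_D) z ?r
      = (\<Sum>c<d * d. kron (mat_conj A) A $$ (c, ?r) * z c)
        + (\<Sum>c<d * d. msum (d * d) (\<lambda>k. kron (mat_conj (B k)) (B k)) {1..m} $$ (c, ?r) * z c)"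
    unfolding mvec_transpose[OF mat_D_carrier r] sum.distrib[symmetric] unfolding mat_D_def
    using r A_carrier by (intro sum.cong refl) (simp add: kron_carrier mat_conj_carrier distrib_right)
  also have "\<dots> = (\<Sum>k\<in>{0..m}. sandwich d (kraus_op k) (unvec d z) (kraus_op k) i j)"
    unfolding sum_kron_column_msum[OF r] sum_atLeast0_atMost using A_carrier B_carrier
    by (simp add: sum_kron_conj_column ij kraus_op_def)
  finally show ?thesis .
qed

lemma mvec_transpose_C: assumes ij: "i < d" "j < d"
  shows "mvec (d * d) (transpose_mat mat_C) z (i * d + j) = lindblad_dual (unvec d z) i j"
proof -
  let ?r = "i * d + j"
  have r: "?r < d * d" by (rule index_pair_less[OF ij])
  have "mvec (d * d) (transpose_mat mat_C) z ?r
      = (\<Sum>c<d * d. kron (mat_conj A) (1\<^sub>m d) $$ (c, ?r) * z c)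
        + (\<Sum>c<d * d. kron (mat_conj (1\<^sub>m d)) A $$ (c, ?r) * z c)
        + (\<Sum>c<d * d. msum (d * d) (\<lambda>k. kron (mat_conj (B k)) (B k)) {1..m} $$ (c, ?r) * z c)"
    unfolding mvec_transpose[OF mat_C_carrier r] sum.distrib[symmetric] mat_conj_one unfolding mat_C_def
    using r A_carrier by (intro sum.cong refl) (simp add: kron_carrier mat_conj_carrier distrib_right)
  also have "\<dots> = lindblad_dual (unvec d z) i j"
    unfolding sum_kron_column_msum[OF r] lindblad_dual_def using A_carrier B_carrier
    by (simp add: sum_kron_conj_column ij)
  finally show ?thesis .
qed

lemma sform_mat_N: "sform d mat_N a a = complex_of_real (\<Sum>k\<in>{0..m}. sqnorm d (mvec d (kraus_op k) a))"
proof -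
  have "sform d mat_N a a = sform d (mat_adjoint A * A) a a + (\<Sum>k\<in>{1..m}. sform d (mat_adjoint (B k) * B k) a a)"
    unfolding mat_N_def sform_msum[symmetric]
    by (intro sform_add mult_carrier_mat[OF mat_adjoint_carrier[OF A_carrier] A_carrier] msum_carrier)
  also have "\<dots> = (\<Sum>k\<in>{0..m}. complex_of_real (sqnorm d (mvec d (kraus_op k) a)))"
    unfolding sum_atLeast0_atMost
    by (auto simp: kraus_op_def sform_adjoint_mult_self[OF A_carrier]
        intro!: sum.cong sform_adjoint_mult_self B_carrier)
  finally show ?thesis by simp
qed

lemma Re_sform_mat_M: "Re (sform d mat_M a a)
    = 2 * Re (\<Sum>i<d. cnj (a i) * mvec d A a i) + (\<Sum>k\<in>{1..m}. sqnorm d (mvec d (B k) a))"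
proof -
  have "sform d mat_M a a
      = sform d A a a + sform d (mat_adjoint A) a a + (\<Sum>k\<in>{1..m}. sform d (mat_adjoint (B k) * B k) a a)"
    unfolding mat_M_def sform_msum[symmetric] using A_carrier
    by (simp add: sform_add add_carrier_mat mat_adjoint_carrier msum_carrier)
  also have "\<dots> = sform d A a a + cnj (sform d A a a) + (\<Sum>k\<in>{1..m}. complex_of_real (sqnorm d (mvec d (B k) a)))"
    by (auto simp: sform_adjoint[OF A_carrier] intro!: sum.cong sform_adjoint_mult_self B_carrier)
  finally show ?thesis unfolding sform_eq_inner_mvec by simp
qed

lemma Re_sform_mat_M_inner: "Re (sform d mat_M a a)
    = Re (sform d (1\<^sub>m d) (mvec d A a) a + sform d (1\<^sub>m d) a (mvec d A a)) + (\<Sum>k\<in>{1..m}. sqnorm d (mvec d (B k) a))"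
proof -
  have "sform d (1\<^sub>m d) (mvec d A a) a = cnj (\<Sum>i<d. cnj (a i) * mvec d A a i)"
    unfolding sform_one by (simp add: mult.commute)
  thus ?thesis unfolding Re_sform_mat_M sform_one by simp
qed

lemma sform_lindblad_dual: "(\<Sum>i<d. \<Sum>j<d. cnj (a i) * lindblad_dual Y i j * b j)
    = sform d Y (mvec d A a) b + sform d Y a (mvec d A b)
      + (\<Sum>k\<in>{1..m}. sform d Y (mvec d (B k) a) (mvec d (B k) b))"
proof -
  have entry: "cnj (a i) * lindblad_dual Y i j * b j
      = cnj (a i) * sandwich d A Y (1\<^sub>m d) i j * b j + cnj (a i) * sandwich d (1\<^sub>m d) Y A i j * b j
        + (\<Sum>k\<in>{1..m}. cnj (a i) * sandwich d (B k) Y (B k) i j * b j)" for i j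
    unfolding lindblad_dual_def by (simp add: distrib_left distrib_right sum_distrib_left sum_distrib_right)
  have "(\<Sum>i<d. \<Sum>j<d. cnj (a i) * lindblad_dual Y i j * b j)
      = (\<Sum>i<d. \<Sum>j<d. cnj (a i) * sandwich d A Y (1\<^sub>m d) i j * b j)
        + (\<Sum>i<d. \<Sum>j<d. cnj (a i) * sandwich d (1\<^sub>m d) Y A i j * b j)
        + (\<Sum>i<d. \<Sum>j<d. \<Sum>k\<in>{1..m}. cnj (a i) * sandwich d (B k) Y (B k) i j * b j)"
    unfolding entry sum.distrib ..
  also have "(\<Sum>i<d. \<Sum>j<d. \<Sum>k\<in>{1..m}. cnj (a i) * sandwich d (B k) Y (B k) i j * b j)
      = (\<Sum>k\<in>{1..m}. \<Sum>i<d. \<Sum>j<d. cnj (a i) * sandwich d (B k) Y (B k) i j * b j)"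
    by (rule sum_swap3[symmetric])
  also have "sform d Y (mvec d A a) (mvec d (1\<^sub>m d) b) = sform d Y (mvec d A a) b"
    by (intro sform_cong_right mvec_one)
  moreover have "sform d Y (mvec d (1\<^sub>m d) a) (mvec d A b) = sform d Y a (mvec d A b)"
    by (intro sform_cong_left mvec_one)
  ultimately show ?thesis unfolding sform_sandwich by simp
qed

lemma lindblad_dual_cong:
  "(\<And>p q. p < d \<Longrightarrow> q < d \<Longrightarrow> X $$ (p,q) = Y $$ (p,q)) \<Longrightarrow> lindblad_dual X i j = lindblad_dual Y i j"
  unfolding lindblad_dual_def by (simp add: sandwich_cong[of d X Y])

lemma lindblad_dual_adjoint: assumes "Y \<in> carrier_mat d d" "i < d" "j < d"
  shows "lindblad_dual (mat_adjoint Y) i j = cnj (lindblad_dual Y j i)"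
  unfolding lindblad_dual_def using assms by (simp add: sandwich_adjoint)

end

section \<open>Upper bounds\<close>

lemma spectrum_transpose: fixes X :: "'a :: field mat" assumes "X \<in> carrier_mat n n"
  shows "spectrum (transpose_mat X) = spectrum X"
proof -
  have T: "transpose_mat X \<in> carrier_mat n n" using assms by simp
  show ?thesis unfolding spectrum_root_char_poly[OF assms] spectrum_root_char_poly[OF T]
    using char_poly_transpose_mat[OF assms] by simp
qed

lemma vec_eigenmatrix:
  assumes T: "T \<in> carrier_mat (d * d) (d * d)" and \<mu>: "\<mu> \<in> spectrum T"
    and G: "\<And>z i j. i < d \<Longrightarrow> j < d \<Longrightarrow> mvec (d * d) T z (i * d + j) = G (unvec d z) i j"
  obtains i0 j0 Y where "i0 < d" "j0 < d" "Y $$ (i0,j0) \<noteq> 0"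
    and "\<And>i j. i < d \<Longrightarrow> j < d \<Longrightarrow> G Y i j = \<mu> * Y $$ (i,j)"
proof -
  obtain x where ev: "eigenvector T x \<mu>" using \<mu> unfolding spectrum_def eigenvalue_def by auto
  hence x: "x \<in> carrier_vec (d * d)" "x \<noteq> 0\<^sub>v (d * d)" using T unfolding eigenvector_def by auto
  define Y where "Y = unvec d (($) x)"
  have "G Y i j = \<mu> * Y $$ (i,j)" if ij: "i < d" "j < d" for i j
    using G[OF ij, of "($) x", folded Y_def] mvec_eigenvector[OF T ev index_pair_less[OF ij]]
    unfolding Y_def using ij by (simp add: index_unvec)
  with unvec_nonzero[OF x] that show ?thesis unfolding Y_def by blast
qed

lemma kraus_eigenvalue_le:
  assumes F: "\<And>a. (\<Sum>k\<in>S. sqnorm d (mvec d (F k) a)) \<le> \<beta> * sqnorm d a" and "\<beta> \<ge> 0"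
    and eig: "\<And>i j. i < d \<Longrightarrow> j < d \<Longrightarrow> (\<Sum>k\<in>S. sandwich d (F k) Y (F k) i j) = \<mu> * Y $$ (i,j)"
    and nz: "i0 < d" "j0 < d" "Y $$ (i0,j0) \<noteq> 0"
  shows "cmod \<mu> \<le> \<beta>"
proof (rule ccontr)
  assume "\<not> cmod \<mu> \<le> \<beta>"
  hence \<mu>: "cmod \<mu> > \<beta>" "cmod \<mu> > 0" using \<open>\<beta> \<ge> 0\<close> by auto
  have sum_eq: "(\<Sum>k\<in>S. sform d Y (mvec d (F k) a) (mvec d (F k) b)) = \<mu> * sform d Y a b" for a b
  proof -
    have "(\<Sum>k\<in>S. sform d Y (mvec d (F k) a) (mvec d (F k) b))
        = (\<Sum>k\<in>S. \<Sum>i<d. \<Sum>j<d. cnj (a i) * sandwich d (F k) Y (F k) i j * b j)"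
      by (simp only: sform_sandwich)
    also have "\<dots> = (\<Sum>i<d. \<Sum>j<d. \<Sum>k\<in>S. cnj (a i) * sandwich d (F k) Y (F k) i j * b j)"
      by (rule sum_swap3)
    also have "\<dots> = (\<Sum>i<d. \<Sum>j<d. cnj (a i) * (\<Sum>k\<in>S. sandwich d (F k) Y (F k) i j) * b j)"
      by (simp add: sum_distrib_left sum_distrib_right)
    also have "\<dots> = (\<Sum>i<d. \<Sum>j<d. \<mu> * (cnj (a i) * Y $$ (i,j) * b j))"
      by (intro sum.cong refl) (simp add: eig)
    also have "\<dots> = \<mu> * sform d Y a b" unfolding sform_def by (simp add: sum_distrib_left)
    finally show ?thesis .
  qed
  have "sform_bounded d Y (\<beta> / cmod \<mu> * c)" if "c \<ge> 0" "sform_bounded d Y c" for c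
    using sform_bounded_kraus_perturbed[OF F \<open>\<beta> \<ge> 0\<close>, where \<kappa> = \<mu> and s = 0 and K = "1\<^sub>m d"]
      sum_eq that \<mu>(2) by simp
  hence "Y $$ (i0,j0) = 0"
    by (rule sform_bounded_contraction_imp_zero) (use \<mu> \<open>\<beta> \<ge> 0\<close> nz in auto)
  with nz show False by simp
qed

lemma small_step_exists:
  fixes \<beta> \<rho> K :: real assumes "\<beta> < \<rho>" "K \<ge> 0"
  obtains t where "t > 0" "1 + t * \<beta> > 0" "\<beta> + 2 * t * K < \<rho>"
proof
  define t where "t = min (1 / (\<bar>\<beta>\<bar> + 1)) ((\<rho> - \<beta>) / (4 * K + 1))"
  show "t > 0" unfolding t_def using assms by simp
  have "t \<le> 1 / (\<bar>\<beta>\<bar> + 1)" "t \<le> (\<rho> - \<beta>) / (4 * K + 1)" unfolding t_def by simp_all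
  hence "t * (\<bar>\<beta>\<bar> + 1) \<le> 1" "t * (4 * K + 1) \<le> \<rho> - \<beta>"
    using assms by (simp_all add: pos_le_divide_eq)
  moreover have "- (t * \<bar>\<beta>\<bar>) \<le> t * \<beta>" "t * K \<ge> 0"
    using mult_left_mono[of "- \<bar>\<beta>\<bar>" \<beta> t] \<open>t > 0\<close> assms(2) by auto
  ultimately show "1 + t * \<beta> > 0" "\<beta> + 2 * t * K < \<rho>" using \<open>t > 0\<close> by (auto simp: algebra_simps)
qed

context kraus_system
begin

lemma spectral_radius_D_le: assumes "d > 0" shows "spectral_radius mat_D \<le> spectral_abscissa mat_N"
proof -
  let ?\<beta> = "spectral_abscissa mat_N"
  have F: "(\<Sum>k\<in>{0..m}. sqnorm d (mvec d (kraus_op k) a)) \<le> ?\<beta> * sqnorm d a" for a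
    using hermitian_rayleigh(2)[OF mat_N_carrier mat_N_hermitian assms, of a] by (simp add: sform_mat_N)
  have "0 \<le> (\<Sum>k\<in>{0..m}. sqnorm d (mvec d (kraus_op k) (basis_fun 0)))" by (intro sum_nonneg sqnorm_nonneg)
  hence "?\<beta> \<ge> 0" using F[of "basis_fun 0"] sqnorm_basis_fun[OF assms] by simp
  have "cmod \<mu> \<le> ?\<beta>" if "\<mu> \<in> spectrum mat_D" for \<mu>
  proof -
    have "transpose_mat mat_D \<in> carrier_mat (d * d) (d * d)" using mat_D_carrier by simp
    moreover have "\<mu> \<in> spectrum (transpose_mat mat_D)" using that spectrum_transpose[OF mat_D_carrier] by simp
    ultimately obtain i0 j0 Y where "i0 < d" "j0 < d" "Y $$ (i0,j0) \<noteq> 0"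
      "\<And>i j. i < d \<Longrightarrow> j < d \<Longrightarrow> (\<Sum>k\<in>{0..m}. sandwich d (kraus_op k) Y (kraus_op k) i j) = \<mu> * Y $$ (i,j)"
      by (rule vec_eigenmatrix[OF _ _ mvec_transpose_D]) (assumption | rule that)+
    thus ?thesis using kraus_eigenvalue_le[OF F \<open>?\<beta> \<ge> 0\<close>] by blast
  qed
  moreover obtain \<mu> where "\<mu> \<in> spectrum mat_D" "spectral_radius mat_D = cmod \<mu>"
    using spectral_radius_mem_max(1)[OF mat_D_carrier] assms by auto
  ultimately show ?thesis by simp
qed

text \<open>Kraus operators of the Euler step \<open>Y \<mapsto> Y + t \<L>(Y)\<close> up to the term \<open>t\<^sup>2 A\<^sup>* Y A\<close>:
\<open>G\<^sub>0 = I + t A\<close> and \<open>G\<^sub>k = \<surd>t B\<^sub>k\<close>.\<close>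

definition euler_kraus :: "real \<Rightarrow> nat \<Rightarrow> complex mat" where
  "euler_kraus t k = mat d d (\<lambda>(i,j). if k = 0 then (if i = j then 1 else 0) + complex_of_real t * A $$ (i,j)
     else complex_of_real (sqrt t) * B k $$ (i,j))"

lemma mvec_euler_kraus_0: "i < d \<Longrightarrow> mvec d (euler_kraus t 0) a i = a i + complex_of_real t * mvec d A a i"
proof -
  assume i: "i < d"
  have "mvec d (euler_kraus t 0) a i = (\<Sum>j<d. (if j = i then a j else 0) + complex_of_real t * (A $$ (i,j) * a j))"
    unfolding mvec_def euler_kraus_def using i by (intro sum.cong refl) (auto simp: algebra_simps)
  thus ?thesis using i unfolding mvec_def by (simp add: sum.distrib sum_distrib_left)
qed

lemma mvec_euler_kraus: "i < d \<Longrightarrow> k \<noteq> 0 \<Longrightarrow> mvec d (euler_kraus t k) a i = complex_of_real (sqrt t) * mvec d (B k) a i"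
  unfolding mvec_def euler_kraus_def by (simp add: sum_distrib_left mult.assoc)

lemma sum_sqnorm_euler_kraus: assumes "t \<ge> 0"
  shows "(\<Sum>k\<in>{0..m}. sqnorm d (mvec d (euler_kraus t k) a))
    = sqnorm d a + t * Re (sform d mat_M a a) + t\<^sup>2 * sqnorm d (mvec d A a)"
proof -
  have "sqnorm d (mvec d (euler_kraus t 0) a)
      = sqnorm d a + 2 * t * Re (\<Sum>i<d. cnj (a i) * mvec d A a i) + t\<^sup>2 * sqnorm d (mvec d A a)"
    unfolding sqnorm_add_scale[symmetric] by (rule sqnorm_cong) (simp add: mvec_euler_kraus_0)
  moreover have "sqnorm d (mvec d (euler_kraus t k) a) = t * sqnorm d (mvec d (B k) a)" if "k \<in> {1..m}" for k
  proof -
    have "sqnorm d (mvec d (euler_kraus t k) a) = sqnorm d (\<lambda>i. complex_of_real (sqrt t) * mvec d (B k) a i)"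
      using that by (intro sqnorm_cong) (simp add: mvec_euler_kraus)
    thus ?thesis unfolding sqnorm_scale using assms by simp
  qed
  ultimately show ?thesis
    unfolding sum_atLeast0_atMost Re_sform_mat_M by (simp add: sum_distrib_left algebra_simps)
qed

lemma sum_sform_euler_kraus: assumes "t \<ge> 0"
  shows "(\<Sum>k\<in>{0..m}. sform d Y (mvec d (euler_kraus t k) a) (mvec d (euler_kraus t k) b))
    = sform d Y a b + complex_of_real t * (\<Sum>i<d. \<Sum>j<d. cnj (a i) * lindblad_dual Y i j * b j)
      + complex_of_real (t\<^sup>2) * sform d Y (mvec d A a) (mvec d A b)"
proof -
  have "sform d Y (mvec d (euler_kraus t 0) a) (mvec d (euler_kraus t 0) b)
      = sform d Y (\<lambda>i. a i + complex_of_real t * mvec d A a i) (\<lambda>i. b i + complex_of_real t * mvec d A b i)"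
    by (intro trans[OF sform_cong_left sform_cong_right]) (simp_all add: mvec_euler_kraus_0)
  also have "\<dots> = sform d Y a b + complex_of_real t * (sform d Y (mvec d A a) b + sform d Y a (mvec d A b))
      + complex_of_real (t\<^sup>2) * sform d Y (mvec d A a) (mvec d A b)"
    unfolding sform_add_scale_left sform_add_scale_right by (simp add: algebra_simps power2_eq_square)
  finally have G0: "sform d Y (mvec d (euler_kraus t 0) a) (mvec d (euler_kraus t 0) b) = \<dots>" .
  have Gk: "sform d Y (mvec d (euler_kraus t k) a) (mvec d (euler_kraus t k) b)
      = complex_of_real t * sform d Y (mvec d (B k) a) (mvec d (B k) b)" if "k \<in> {1..m}" for k
  proof -
    have "sform d Y (mvec d (euler_kraus t k) a) (mvec d (euler_kraus t k) b)
        = sform d Y (\<lambda>i. complex_of_real (sqrt t) * mvec d (B k) a i) (\<lambda>i. complex_of_real (sqrt t) * mvec d (B k) b i)"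
      using that by (intro trans[OF sform_cong_left sform_cong_right]) (simp_all add: mvec_euler_kraus)
    thus ?thesis unfolding sform_scale using assms by simp
  qed
  show ?thesis
    unfolding sum_atLeast0_atMost G0 sform_lindblad_dual
    by (simp add: Gk sum_distrib_left algebra_simps)
qed

lemma sum_sqnorm_euler_kraus_le: assumes "d > 0" "t \<ge> 0"
  shows "(\<Sum>k\<in>{0..m}. sqnorm d (mvec d (euler_kraus t k) a))
    \<le> (1 + t * spectral_abscissa mat_M + t\<^sup>2 * frobenius_sq d A) * sqnorm d a"
proof -
  have "t * Re (sform d mat_M a a) \<le> t * (spectral_abscissa mat_M * sqnorm d a)"
    using hermitian_rayleigh(2)[OF mat_M_carrier mat_M_hermitian assms(1)] assms(2) by (rule mult_left_mono)
  moreover have "t\<^sup>2 * sqnorm d (mvec d A a) \<le> t\<^sup>2 * (frobenius_sq d A * sqnorm d a)"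
    using sqnorm_mvec_le_frobenius by (rule mult_left_mono) simp
  ultimately show ?thesis unfolding sum_sqnorm_euler_kraus[OF assms(2)] by (simp add: algebra_simps)
qed

lemma lindblad_eigenvalue_le:
  assumes "d > 0" and eig: "\<And>i j. i < d \<Longrightarrow> j < d \<Longrightarrow> lindblad_dual Y i j = \<mu> * Y $$ (i,j)"
    and nz: "i0 < d" "j0 < d" "Y $$ (i0,j0) \<noteq> 0"
  shows "Re \<mu> \<le> spectral_abscissa mat_M"
proof (rule ccontr)
  let ?\<beta> = "spectral_abscissa mat_M" and ?K = "frobenius_sq d A"
  assume "\<not> Re \<mu> \<le> ?\<beta>"
  then obtain t where t: "t > 0" "1 + t * ?\<beta> > 0" "?\<beta> + 2 * t * ?K < Re \<mu>"
    using small_step_exists[of ?\<beta> "Re \<mu>" ?K] frobenius_sq_nonneg by auto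
  define \<beta>t where "\<beta>t = 1 + t * ?\<beta> + t\<^sup>2 * ?K"
  have "\<beta>t \<ge> 0" unfolding \<beta>t_def using t frobenius_sq_nonneg[of d A] by simp
  note F = sum_sqnorm_euler_kraus_le[OF \<open>d > 0\<close> less_imp_le[OF t(1)], folded \<beta>t_def]
  have sum_eq: "(\<Sum>k\<in>{0..m}. sform d Y (mvec d (euler_kraus t k) a) (mvec d (euler_kraus t k) b))
      = (1 + complex_of_real t * \<mu>) * sform d Y a b + complex_of_real (t\<^sup>2) * sform d Y (mvec d A a) (mvec d A b)"
    for a b
  proof -
    have "(\<Sum>i<d. \<Sum>j<d. cnj (a i) * lindblad_dual Y i j * b j) = \<mu> * sform d Y a b"
      unfolding sform_def sum_distrib_left by (intro sum.cong refl) (simp add: eig mult_ac)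
    thus ?thesis unfolding sum_sform_euler_kraus[OF less_imp_le[OF t(1)]] by (simp add: algebra_simps)
  qed
  have "t * ?\<beta> < t * Re \<mu>" using t(1) \<open>\<not> Re \<mu> \<le> ?\<beta>\<close> by simp
  hence den: "1 + t * Re \<mu> > 0" using t(2) by linarith
  have le_cmod: "1 + t * Re \<mu> \<le> cmod (1 + complex_of_real t * \<mu>)"
    using complex_Re_le_cmod[of "1 + complex_of_real t * \<mu>"] by simp
  hence "1 + complex_of_real t * \<mu> \<noteq> 0" using den by auto
  have "\<beta>t + t\<^sup>2 * ?K = 1 + t * (?\<beta> + 2 * t * ?K)"
    unfolding \<beta>t_def by (simp add: power2_eq_square algebra_simps)
  also have "\<dots> < 1 + t * Re \<mu>" using t(1,3) by simp
  also note le_cmod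
  finally have q: "(\<beta>t + t\<^sup>2 * ?K) / cmod (1 + complex_of_real t * \<mu>) < 1"
    using den le_cmod by (simp add: divide_less_eq)
  have "sform_bounded d Y ((\<beta>t + t\<^sup>2 * ?K) / cmod (1 + complex_of_real t * \<mu>) * c)"
    if "c \<ge> 0" "sform_bounded d Y c" for c
    using sform_bounded_kraus_perturbed[OF F \<open>\<beta>t \<ge> 0\<close> sum_eq _ _ that(2,1)] \<open>1 + complex_of_real t * \<mu> \<noteq> 0\<close>
    by simp
  hence "Y $$ (i0,j0) = 0" by (rule sform_bounded_contraction_imp_zero) (use q nz \<open>\<beta>t \<ge> 0\<close> frobenius_sq_nonneg[of d A] in auto)
  with nz show False by simp
qed

lemma spectral_abscissa_C_le: assumes "d > 0" shows "spectral_abscissa mat_C \<le> spectral_abscissa mat_M"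
proof -
  have "Re \<mu> \<le> spectral_abscissa mat_M" if "\<mu> \<in> spectrum mat_C" for \<mu>
  proof -
    have "transpose_mat mat_C \<in> carrier_mat (d * d) (d * d)" using mat_C_carrier by simp
    moreover have "\<mu> \<in> spectrum (transpose_mat mat_C)" using that spectrum_transpose[OF mat_C_carrier] by simp
    ultimately obtain i0 j0 Y where "i0 < d" "j0 < d" "Y $$ (i0,j0) \<noteq> 0"
      "\<And>i j. i < d \<Longrightarrow> j < d \<Longrightarrow> lindblad_dual Y i j = \<mu> * Y $$ (i,j)"
      by (rule vec_eigenmatrix[OF _ _ mvec_transpose_C]) (assumption | rule that)+
    thus ?thesis using lindblad_eigenvalue_le[OF assms] by blast
  qed
  moreover have "finite (Re ` spectrum mat_C)" "Re ` spectrum mat_C \<noteq> {}"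
    using card_finite_spectrum(1)[OF mat_C_carrier] spectrum_non_empty[OF mat_C_carrier] assms by auto
  ultimately show ?thesis unfolding spectral_abscissa_def by (simp add: Max_le_iff)
qed

end

section \<open>Lower bounds\<close>

lemma spectral_radius_transpose: assumes "X \<in> carrier_mat n n"
  shows "spectral_radius (transpose_mat X) = spectral_radius X"
  unfolding spectral_radius_def spectrum_transpose[OF assms] ..

definition vec_one :: "nat \<Rightarrow> nat \<Rightarrow> complex" where
  "vec_one d = (\<lambda>s. if s div d = s mod d then 1 else 0)"

lemma mvec_pow_iterate:
  assumes T: "T \<in> carrier_mat (d * d) (d * d)"
    and G: "\<And>z i j. i < d \<Longrightarrow> j < d \<Longrightarrow> mvec (d * d) T z (i * d + j) = G (unvec d z) i j"
    and ij: "i < d" "j < d"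
  shows "unvec d (mvec (d * d) (T ^\<^sub>m Suc k) x) $$ (i,j) = G (unvec d (mvec (d * d) (T ^\<^sub>m k) x)) i j"
  unfolding pow_mat_Suc_left[OF T] index_unvec[OF ij]
  using mvec_mult[OF T _ index_pair_less[OF ij], of "T ^\<^sub>m k" x] T G[OF ij] by simp

lemma kraus_iterate_lower:
  assumes F: "\<And>a. l * sqnorm d a \<le> (\<Sum>k\<in>S. sqnorm d (mvec d (F k) a))" and "l \<ge> 0"
    and Y0: "\<And>i j. i < d \<Longrightarrow> j < d \<Longrightarrow> Y 0 $$ (i,j) = 1\<^sub>m d $$ (i,j)"
    and Y_Suc: "\<And>n i j. i < d \<Longrightarrow> j < d \<Longrightarrow> Y (Suc n) $$ (i,j) = (\<Sum>k\<in>S. sandwich d (F k) (Y n) (F k) i j)"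
  shows "l ^ n * sqnorm d a \<le> Re (sform d (Y n) a a)"
proof (induction n arbitrary: a)
  case 0
  have "sform d (Y 0) a a = sform d (1\<^sub>m d) a a" by (intro sform_cong Y0)
  thus ?case by (simp add: sform_one_self)
next
  case (Suc n)
  have "sform d (Y (Suc n)) a a = (\<Sum>i<d. \<Sum>j<d. cnj (a i) * (\<Sum>k\<in>S. sandwich d (F k) (Y n) (F k) i j) * a j)"
    unfolding sform_def by (intro sum.cong refl) (simp add: Y_Suc)
  also have "\<dots> = (\<Sum>i<d. \<Sum>j<d. \<Sum>k\<in>S. cnj (a i) * sandwich d (F k) (Y n) (F k) i j * a j)"
    by (simp add: sum_distrib_left sum_distrib_right)
  also have "\<dots> = (\<Sum>k\<in>S. \<Sum>i<d. \<Sum>j<d. cnj (a i) * sandwich d (F k) (Y n) (F k) i j * a j)"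
    by (rule sum_swap3[symmetric])
  also have "\<dots> = (\<Sum>k\<in>S. sform d (Y n) (mvec d (F k) a) (mvec d (F k) a))" by (simp only: sform_sandwich)
  finally have "Re (sform d (Y (Suc n)) a a) = (\<Sum>k\<in>S. Re (sform d (Y n) (mvec d (F k) a) (mvec d (F k) a)))"
    by simp
  also have "\<dots> \<ge> (\<Sum>k\<in>S. l ^ n * sqnorm d (mvec d (F k) a))" by (intro sum_mono Suc.IH)
  finally have "l ^ n * (\<Sum>k\<in>S. sqnorm d (mvec d (F k) a)) \<le> Re (sform d (Y (Suc n)) a a)"
    by (simp add: sum_distrib_left)
  moreover have "l ^ n * (l * sqnorm d a) \<le> l ^ n * (\<Sum>k\<in>S. sqnorm d (mvec d (F k) a))"
    using F \<open>l \<ge> 0\<close> by (simp add: mult_left_mono)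
  ultimately show ?case by (simp add: mult_ac)
qed

context kraus_system
begin

lemma spectral_min_re_N_le: assumes "d > 0" shows "spectral_min_re mat_N \<le> spectral_radius mat_D"
proof -
  let ?l = "spectral_min_re mat_N" and ?T = "transpose_mat mat_D"
  have T: "?T \<in> carrier_mat (d * d) (d * d)" using mat_D_carrier by simp
  have "?l \<le> r" if r: "r > spectral_radius mat_D" and "?l > 0" for r
  proof -
    define Y where "Y n = unvec d (mvec (d * d) (?T ^\<^sub>m n) (vec_one d))" for n
    have "r > 0" using r spectral_radius_nonneg[OF mat_D_carrier] \<open>d > 0\<close> by simp
    obtain c where c: "\<And>n s. s < d * d \<Longrightarrow> cmod (mvec (d * d) (?T ^\<^sub>m n) (vec_one d) s) \<le> c * r ^ n"
      using mvec_pow_bound[OF T] r spectral_radius_transpose[OF mat_D_carrier] by metis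
    have low: "?l ^ n * sqnorm d a \<le> Re (sform d (Y n) a a)" for n a
    proof (rule kraus_iterate_lower[where S = "{0..m}" and F = kraus_op])
      show "?l * sqnorm d a \<le> (\<Sum>k\<in>{0..m}. sqnorm d (mvec d (kraus_op k) a))" for a
        using hermitian_rayleigh(1)[OF mat_N_carrier mat_N_hermitian \<open>d > 0\<close>, of a] by (simp add: sform_mat_N)
      show "Y 0 $$ (i,j) = 1\<^sub>m d $$ (i,j)" if "i < d" "j < d" for i j
        unfolding Y_def using that mat_D_carrier by (simp add: index_unvec mvec_one index_pair_less vec_one_def)
      show "Y (Suc n) $$ (i,j) = (\<Sum>k\<in>{0..m}. sandwich d (kraus_op k) (Y n) (kraus_op k) i j)"
        if "i < d" "j < d" for n i j
        unfolding Y_def by (rule mvec_pow_iterate[OF T mvec_transpose_D that])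
    qed (use \<open>?l > 0\<close> in simp)
    have "?l ^ n \<le> c * r ^ n" for n
    proof -
      have "?l ^ n \<le> Re (sform d (Y n) (basis_fun 0) (basis_fun 0))"
        using low[of n "basis_fun 0"] sqnorm_basis_fun[OF \<open>d > 0\<close>] by simp
      also have "\<dots> \<le> cmod (Y n $$ (0,0))" using sform_basis_fun[OF \<open>d > 0\<close> \<open>d > 0\<close>] complex_Re_le_cmod by simp
      also have "\<dots> \<le> c * r ^ n" unfolding Y_def using c \<open>d > 0\<close> by (simp add: index_unvec)
      finally show ?thesis .
    qed
    thus ?thesis using pow_le_mult_pow_imp_le \<open>r > 0\<close> by blast
  qed
  moreover have "spectral_radius mat_D \<ge> 0" using spectral_radius_nonneg[OF mat_D_carrier] \<open>d > 0\<close> by simp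
  ultimately show ?thesis by (cases "?l > 0") (auto intro: dense_ge)
qed

end

lemma mvec_scale: "mvec n K (\<lambda>s. c * z s) i = c * mvec n K z i"
  unfolding mvec_def by (simp add: sum_distrib_left mult_ac)

lemma mvec_shift: assumes "X \<in> carrier_mat n n" "i < n"
  shows "mvec n (c \<cdot>\<^sub>m 1\<^sub>m n - X) z i = c * z i - mvec n X z i"
proof -
  have "mvec n (c \<cdot>\<^sub>m 1\<^sub>m n - X) z i = (\<Sum>j<n. (if j = i then c * z j else 0) - X $$ (i,j) * z j)"
    unfolding mvec_def using assms by (intro sum.cong refl) (auto simp: left_diff_distrib)
  thus ?thesis using assms(2) unfolding mvec_def by (simp add: sum_subtractf)
qed

lemma shifted_inverse_exists:
  fixes X :: "complex mat"
  assumes X: "X \<in> carrier_mat n n" and c: "c \<notin> spectrum X"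
  obtains R where "R \<in> carrier_mat n n" "R * (c \<cdot>\<^sub>m 1\<^sub>m n - X) = 1\<^sub>m n" "(c \<cdot>\<^sub>m 1\<^sub>m n - X) * R = 1\<^sub>m n"
proof -
  let ?T = "c \<cdot>\<^sub>m 1\<^sub>m n - X"
  have T: "?T \<in> carrier_mat n n" by (rule minus_carrier_mat[OF X])
  have "det ?T \<noteq> 0"
  proof
    assume "det ?T = 0"
    then obtain v where v: "v \<in> carrier_vec n" "v \<noteq> 0\<^sub>v n" "?T *\<^sub>v v = 0\<^sub>v n"
      using det_0_iff_vec_prod_zero[OF T] by auto
    have "mvec n X (($) v) i = c * v $ i" if "i < n" for i
      using mvec_mult_mat_vec[OF T v(1) that] arg_cong[OF v(3), of "\<lambda>w. w $ i"] that v(1)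
      unfolding mvec_shift[OF X that] by simp
    with c show False using mem_spectrum_of_mvec[OF X v(1,2)] by blast
  qed
  thus ?thesis using that det_non_zero_imp_unit[OF T, of undefined] unfolding Units_def ring_mat_def by auto
qed

text \<open>An eigenvalue \<open>\<nu>\<close> of \<open>(c I - X)\<^sup>-\<^sup>1\<close> comes from the eigenvalue \<open>c - 1 / \<nu>\<close> of \<open>X\<close>.\<close>

lemma resolvent_spectral_radius:
  fixes X :: "complex mat"
  assumes X: "X \<in> carrier_mat n n" and "n > 0" and R: "R \<in> carrier_mat n n"
    and TR: "(complex_of_real c \<cdot>\<^sub>m 1\<^sub>m n - X) * R = 1\<^sub>m n"
    and spec: "\<And>\<mu>. \<mu> \<in> spectrum X \<Longrightarrow> Re \<mu> < l" and "l < c"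
  shows "spectral_radius R < 1 / (c - l)"
proof -
  let ?T = "complex_of_real c \<cdot>\<^sub>m 1\<^sub>m n - X"
  have T: "?T \<in> carrier_mat n n" by (rule minus_carrier_mat[OF X])
  obtain \<nu> where \<nu>: "\<nu> \<in> spectrum R" and eq: "spectral_radius R = cmod \<nu>"
    using spectral_radius_mem_max(1)[OF R \<open>n > 0\<close>] by auto
  then obtain w where ev: "eigenvector R w \<nu>" unfolding spectrum_def eigenvalue_def by auto
  hence w: "w \<in> carrier_vec n" "w \<noteq> 0\<^sub>v n" using R unfolding eigenvector_def by auto
  have wT: "w $ s = \<nu> * mvec n ?T (($) w) s" if s: "s < n" for s
  proof -
    have "w $ s = mvec n ?T (mvec n R (($) w)) s"
      using mvec_mult[OF T R s, where a = "($) w"] TR mvec_one[OF s] by simp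
    also have "\<dots> = mvec n ?T (\<lambda>s. \<nu> * w $ s) s" by (intro mvec_cong mvec_eigenvector[OF R ev])
    finally show ?thesis by (simp add: mvec_scale)
  qed
  have "\<nu> \<noteq> 0"
  proof
    assume "\<nu> = 0"
    hence "w = 0\<^sub>v n" using w(1) wT by (intro eq_vecI) auto
    with w(2) show False ..
  qed
  have "mvec n X (($) w) s = (complex_of_real c - 1 / \<nu>) * w $ s" if s: "s < n" for s
    using wT[OF s] mvec_shift[OF X s, where z = "($) w" and c = "complex_of_real c"] \<open>\<nu> \<noteq> 0\<close>
    by (simp add: field_simps)
  hence "complex_of_real c - 1 / \<nu> \<in> spectrum X" by (rule mem_spectrum_of_mvec[OF X w])
  hence "c - l < Re (1 / \<nu>)" using spec by fastforce
  also have "\<dots> \<le> 1 / cmod \<nu>" using complex_Re_le_cmod[of "1 / \<nu>"] by (simp add: norm_divide)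
  finally show ?thesis using eq \<open>l < c\<close> \<open>\<nu> \<noteq> 0\<close> by (simp add: field_simps)
qed

context kraus_system
begin

lemma sform_min_eigenvector_le:
  assumes "d > 0" and X: "X \<in> carrier_mat d d" "hermitian_mat d X"
    and ev: "eigenvector X v (complex_of_real (spectral_min_re X))"
    and eq: "\<And>i j. i < d \<Longrightarrow> j < d \<Longrightarrow> complex_of_real c * X $$ (i,j) - lindblad_dual X i j = Y $$ (i,j)"
  shows "Re (sform d Y (($) v) (($) v))
    \<le> spectral_min_re X * (c * sqnorm d (($) v) - Re (sform d mat_M (($) v) (($) v)))"
proof -
  let ?x = "spectral_min_re X" and ?v = "($) v"
  have E: "sform d Y ?v ?v = complex_of_real c * sform d X ?v ?v
      - (sform d X (mvec d A ?v) ?v + sform d X ?v (mvec d A ?v)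
         + (\<Sum>k\<in>{1..m}. sform d X (mvec d (B k) ?v) (mvec d (B k) ?v)))"
  proof -
    have "sform d Y ?v ?v = (\<Sum>i<d. \<Sum>j<d. cnj (?v i) * (complex_of_real c * X $$ (i,j) - lindblad_dual X i j) * ?v j)"
      unfolding sform_def by (intro sum.cong refl) (simp add: eq)
    also have "\<dots> = complex_of_real c * sform d X ?v ?v - (\<Sum>i<d. \<Sum>j<d. cnj (?v i) * lindblad_dual X i j * ?v j)"
      unfolding sform_def by (simp add: algebra_simps sum_subtractf sum_distrib_left)
    finally show ?thesis unfolding sform_lindblad_dual .
  qed
  have e1: "sform d X ?v ?v = complex_of_real (?x * sqnorm d ?v)"
    using sform_eigenvector[OF X(1) ev, of ?v] by (simp add: sform_one_self)
  have e2: "sform d X (mvec d A ?v) ?v = complex_of_real ?x * sform d (1\<^sub>m d) (mvec d A ?v) ?v"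
    by (rule sform_eigenvector[OF X(1) ev])
  have e3: "sform d X ?v (mvec d A ?v) = complex_of_real ?x * sform d (1\<^sub>m d) ?v (mvec d A ?v)"
    using arg_cong[OF e2, of cnj] cnj_sform_hermitian[OF X(2)] cnj_sform_hermitian[OF hermitian_mat_one]
    by simp
  have "Re (sform d Y ?v ?v) = c * (?x * sqnorm d ?v)
      - ?x * Re (sform d (1\<^sub>m d) (mvec d A ?v) ?v + sform d (1\<^sub>m d) ?v (mvec d A ?v))
      - Re (\<Sum>k\<in>{1..m}. sform d X (mvec d (B k) ?v) (mvec d (B k) ?v))"
    unfolding E e1 e2 e3 by (simp add: algebra_simps)
  moreover have "?x * (\<Sum>k\<in>{1..m}. sqnorm d (mvec d (B k) ?v))
      \<le> Re (\<Sum>k\<in>{1..m}. sform d X (mvec d (B k) ?v) (mvec d (B k) ?v))"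
    unfolding Re_sum sum_distrib_left by (intro sum_mono hermitian_rayleigh(1)[OF X \<open>d > 0\<close>])
  ultimately show ?thesis unfolding Re_sform_mat_M_inner by (simp add: algebra_simps)
qed

lemma resolvent_step_lower:
  assumes "d > 0" and X: "X \<in> carrier_mat d d" "hermitian_mat d X" and c: "spectral_abscissa mat_M < c"
    and eq: "\<And>i j. i < d \<Longrightarrow> j < d \<Longrightarrow> complex_of_real c * X $$ (i,j) - lindblad_dual X i j = Y $$ (i,j)"
    and low: "\<And>a. s * sqnorm d a \<le> Re (sform d Y a a)" and "s > 0"
  shows "s / (c - spectral_min_re mat_M) * sqnorm d a \<le> Re (sform d X a a)"
proof -
  let ?x = "spectral_min_re X" and ?l = "spectral_min_re mat_M" and ?\<beta> = "spectral_abscissa mat_M"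
  obtain v where ev: "eigenvector X v (complex_of_real ?x)" using hermitian_min_eigenvector[OF X \<open>d > 0\<close>] .
  let ?v = "($) v"
  have vpos: "sqnorm d ?v > 0" by (rule sqnorm_eigenvector_pos[OF X(1) ev])
  note key = sform_min_eigenvector_le[OF \<open>d > 0\<close> X ev eq]
  have M: "?l * sqnorm d ?v \<le> Re (sform d mat_M ?v ?v)" "Re (sform d mat_M ?v ?v) \<le> ?\<beta> * sqnorm d ?v"
    using hermitian_rayleigh[OF mat_M_carrier mat_M_hermitian \<open>d > 0\<close>] by auto
  have "0 < (c - ?\<beta>) * sqnorm d ?v" using c vpos by simp
  also have "\<dots> \<le> c * sqnorm d ?v - Re (sform d mat_M ?v ?v)" using M(2) by (simp add: algebra_simps)
  finally have pos: "0 < c * sqnorm d ?v - Re (sform d mat_M ?v ?v)" .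
  have "0 < s * sqnorm d ?v" using \<open>s > 0\<close> vpos by simp
  also have "\<dots> \<le> ?x * (c * sqnorm d ?v - Re (sform d mat_M ?v ?v))" using low[of ?v] key by simp
  finally have "?x > 0" using pos by (simp add: zero_less_mult_iff)
  moreover have "?x * (c * sqnorm d ?v - Re (sform d mat_M ?v ?v)) \<le> ?x * ((c - ?l) * sqnorm d ?v)"
    using M(1) by (intro mult_left_mono) (auto simp: algebra_simps \<open>?x > 0\<close> less_imp_le)
  ultimately have "s * sqnorm d ?v \<le> ?x * ((c - ?l) * sqnorm d ?v)" using low[of ?v] key by linarith
  hence "s \<le> ?x * (c - ?l)" using vpos by (simp add: mult.assoc)
  moreover have "?l * sqnorm d ?v \<le> ?\<beta> * sqnorm d ?v" using M by linarith
  hence "?l \<le> ?\<beta>" using vpos by (rule mult_right_le_imp_le)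
  hence "c - ?l > 0" using c by linarith
  ultimately have "s / (c - ?l) \<le> ?x" by (simp add: pos_divide_le_eq)
  thus ?thesis using hermitian_rayleigh(1)[OF X \<open>d > 0\<close>, of a] sqnorm_nonneg[of d a]
    by (meson mult_right_mono order_trans)
qed

end

context kraus_system
begin

definition shifted_CT :: "real \<Rightarrow> complex mat" where
  "shifted_CT c = complex_of_real c \<cdot>\<^sub>m 1\<^sub>m (d * d) - transpose_mat mat_C"

lemma transpose_C_carrier: "transpose_mat mat_C \<in> carrier_mat (d * d) (d * d)"
  using mat_C_carrier by simp

lemma shifted_CT_carrier: "shifted_CT c \<in> carrier_mat (d * d) (d * d)"
  unfolding shifted_CT_def by (rule minus_carrier_mat[OF transpose_C_carrier])

lemma mvec_shifted_CT: assumes "i < d" "j < d"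
  shows "mvec (d * d) (shifted_CT c) z (i * d + j)
    = complex_of_real c * unvec d z $$ (i,j) - lindblad_dual (unvec d z) i j"
  unfolding shifted_CT_def using mvec_shift[OF transpose_C_carrier index_pair_less[OF assms]]
    mvec_transpose_C[OF assms] by (simp add: index_unvec assms)

lemma shifted_CT_injective:
  assumes R: "R \<in> carrier_mat (d * d) (d * d)" "R * shifted_CT c = 1\<^sub>m (d * d)"
    and eq: "\<And>i j. i < d \<Longrightarrow> j < d \<Longrightarrow>
        complex_of_real c * X $$ (i,j) - lindblad_dual X i j = complex_of_real c * X' $$ (i,j) - lindblad_dual X' i j"
    and ij: "i < d" "j < d"
  shows "X $$ (i,j) = X' $$ (i,j)"
proof -
  define vec_of where "vec_of Z s = Z $$ (s div d, s mod d)" for Z :: "complex mat" and s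
  have unvec_vec_of: "unvec d (vec_of Z) $$ (p,q) = Z $$ (p,q)" if "p < d" "q < d" for Z p q
    unfolding vec_of_def using that by (simp add: index_unvec)
  have T_eq: "mvec (d * d) (shifted_CT c) (vec_of X) s = mvec (d * d) (shifted_CT c) (vec_of X') s"
    if s: "s < d * d" for s
  proof -
    have mvec_vec_of: "mvec (d * d) (shifted_CT c) (vec_of Z) (p * d + q)
        = complex_of_real c * Z $$ (p,q) - lindblad_dual Z p q" if pq: "p < d" "q < d" for Z p q
      using mvec_shifted_CT[OF pq] unvec_vec_of[OF pq] lindblad_dual_cong[of "unvec d (vec_of Z)" Z p q]
        unvec_vec_of by simp
    define p where "p = s div d"
    define q where "q = s mod d"
    have pq: "p < d" "q < d" "s = p * d + q" using div_mod_less_square[OF s] unfolding p_def q_def by simp_all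
    show ?thesis unfolding pq(3) mvec_vec_of[OF pq(1,2)] by (rule eq[OF pq(1,2)])
  qed
  have R_T: "mvec (d * d) R (mvec (d * d) (shifted_CT c) u) s = u s" if "s < d * d" for u s
    using mvec_mult[OF R(1) shifted_CT_carrier that, where a = u, symmetric] R(2) mvec_one[OF that] by simp
  have "vec_of X s = vec_of X' s" if s: "s < d * d" for s
  proof -
    have "vec_of X s = mvec (d * d) R (mvec (d * d) (shifted_CT c) (vec_of X)) s" by (rule R_T[OF s, symmetric])
    also have "\<dots> = mvec (d * d) R (mvec (d * d) (shifted_CT c) (vec_of X')) s"
      by (rule mvec_cong) (rule T_eq)
    also have "\<dots> = vec_of X' s" by (rule R_T[OF s])
    finally show ?thesis .
  qed
  from this[OF index_pair_less[OF ij]] show ?thesis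
    using unvec_vec_of[OF ij, of X] unvec_vec_of[OF ij, of X'] by (simp add: index_unvec[OF ij])
qed

lemma shifted_CT_iterate:
  assumes R: "R \<in> carrier_mat (d * d) (d * d)" "shifted_CT c * R = 1\<^sub>m (d * d)" and ij: "i < d" "j < d"
  shows "complex_of_real c * unvec d (mvec (d * d) (R ^\<^sub>m Suc n) x) $$ (i,j)
      - lindblad_dual (unvec d (mvec (d * d) (R ^\<^sub>m Suc n) x)) i j
    = unvec d (mvec (d * d) (R ^\<^sub>m n) x) $$ (i,j)"
proof -
  let ?r = "i * d + j"
  have "mvec (d * d) (shifted_CT c) (mvec (d * d) (R ^\<^sub>m Suc n) x) ?r
      = mvec (d * d) (shifted_CT c) (mvec (d * d) R (mvec (d * d) (R ^\<^sub>m n) x)) ?r"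
    unfolding pow_mat_Suc_left[OF R(1)] using R(1) by (intro mvec_cong mvec_mult) auto
  also have "\<dots> = mvec (d * d) (R ^\<^sub>m n) x ?r"
    using mvec_mult[OF shifted_CT_carrier R(1) index_pair_less[OF ij], symmetric] R(2)
      mvec_one[OF index_pair_less[OF ij]] by simp
  finally show ?thesis using mvec_shifted_CT[OF ij] by (simp add: index_unvec ij)
qed

text \<open>\<open>\<L>\<close> commutes with taking adjoints, so by injectivity the preimage of a Hermitian matrix
under \<open>c I - \<L>\<close> is Hermitian.\<close>

lemma shifted_CT_preimage_hermitian:
  assumes R: "R \<in> carrier_mat (d * d) (d * d)" "R * shifted_CT c = 1\<^sub>m (d * d)"
    and X: "X \<in> carrier_mat d d" and Y: "hermitian_mat d Y"
    and eq: "\<And>i j. i < d \<Longrightarrow> j < d \<Longrightarrow> complex_of_real c * X $$ (i,j) - lindblad_dual X i j = Y $$ (i,j)"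
  shows "hermitian_mat d X"
proof -
  have "mat_adjoint X $$ (i,j) = X $$ (i,j)" if ij: "i < d" "j < d" for i j
  proof (rule shifted_CT_injective[OF R _ ij])
    fix p q assume pq: "p < d" "q < d"
    have "complex_of_real c * mat_adjoint X $$ (p,q) - lindblad_dual (mat_adjoint X) p q
        = cnj (complex_of_real c * X $$ (q,p) - lindblad_dual X q p)"
      using X pq by (simp add: index_mat_adjoint lindblad_dual_adjoint)
    also have "\<dots> = cnj (Y $$ (q,p))" using eq[OF pq(2,1)] by simp
    also have "\<dots> = Y $$ (p,q)" using Y pq unfolding hermitian_mat_def by (metis complex_cnj_cnj)
    finally show "complex_of_real c * mat_adjoint X $$ (p,q) - lindblad_dual (mat_adjoint X) p q
        = complex_of_real c * X $$ (p,q) - lindblad_dual X p q" using eq[OF pq] by simp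
  qed
  thus ?thesis using X unfolding hermitian_mat_def by (metis index_mat_adjoint)
qed

lemma resolvent_iterates_lower:
  assumes "d > 0" and c: "spectral_abscissa mat_M < c" and R: "R \<in> carrier_mat (d * d) (d * d)"
    and RT: "R * shifted_CT c = 1\<^sub>m (d * d)" and TR: "shifted_CT c * R = 1\<^sub>m (d * d)"
  defines "Y n \<equiv> unvec d (mvec (d * d) (R ^\<^sub>m n) (vec_one d))"
  shows "hermitian_mat d (Y n) \<and> (\<forall>a. (1 / (c - spectral_min_re mat_M)) ^ n * sqnorm d a \<le> Re (sform d (Y n) a a))"
proof (induction n)
  case 0
  have "Y 0 $$ (i,j) = 1\<^sub>m d $$ (i,j)" if "i < d" "j < d" for i j
    unfolding Y_def using that R by (simp add: index_unvec mvec_one index_pair_less vec_one_def)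
  hence "hermitian_mat d (Y 0)" "sform d (Y 0) a a = sform d (1\<^sub>m d) a a" for a
    unfolding hermitian_mat_def by (auto intro: sform_cong)
  thus ?case by (simp add: sform_one_self)
next
  case (Suc n)
  let ?r = "1 / (c - spectral_min_re mat_M)"
  have X: "Y (Suc n) \<in> carrier_mat d d" unfolding Y_def by (rule unvec_carrier)
  note eq = shifted_CT_iterate[OF R TR, of _ _ n "vec_one d", folded Y_def]
  have herm: "hermitian_mat d (Y (Suc n))" using shifted_CT_preimage_hermitian[OF R RT X _ eq] Suc.IH by blast
  have "?r ^ n > 0"
    using hermitian_rayleigh[OF mat_M_carrier mat_M_hermitian \<open>d > 0\<close>, of "basis_fun 0"] c
    by (simp add: sqnorm_basis_fun[OF \<open>d > 0\<close>])
  hence "?r ^ n / (c - spectral_min_re mat_M) * sqnorm d a \<le> Re (sform d (Y (Suc n)) a a)" for a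
    using resolvent_step_lower[OF \<open>d > 0\<close> X herm c eq] Suc.IH by blast
  thus ?case using herm by simp
qed

lemma spectral_min_re_M_le: assumes "d > 0" shows "spectral_min_re mat_M \<le> spectral_abscissa mat_C"
proof (rule ccontr)
  let ?l = "spectral_min_re mat_M"
  assume "\<not> ?l \<le> spectral_abscissa mat_C"
  define c where "c = spectral_abscissa mat_M + 1"
  have "?l \<le> spectral_abscissa mat_M"
    using hermitian_rayleigh[OF mat_M_carrier mat_M_hermitian \<open>d > 0\<close>, of "basis_fun 0"]
    by (simp add: sqnorm_basis_fun[OF \<open>d > 0\<close>])
  hence "?l < c" unfolding c_def by simp
  have spec: "Re \<mu> < ?l" if "\<mu> \<in> spectrum (transpose_mat mat_C)" for \<mu>
    using le_spectral_abscissa[OF mat_C_carrier] that spectrum_transpose[OF mat_C_carrier]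
      \<open>\<not> ?l \<le> spectral_abscissa mat_C\<close> by fastforce
  hence "complex_of_real c \<notin> spectrum (transpose_mat mat_C)" using \<open>?l < c\<close> by fastforce
  then obtain R where R: "R \<in> carrier_mat (d * d) (d * d)" "R * shifted_CT c = 1\<^sub>m (d * d)"
    "shifted_CT c * R = 1\<^sub>m (d * d)"
    using shifted_inverse_exists[OF transpose_C_carrier] unfolding shifted_CT_def by blast
  have "spectral_radius R < 1 / (c - ?l)"
    using resolvent_spectral_radius[OF transpose_C_carrier _ R(1) R(3)[unfolded shifted_CT_def] spec \<open>?l < c\<close>]
      \<open>d > 0\<close> by simp
  moreover have "1 / (c - ?l) \<le> r" if r: "r > spectral_radius R" for r
  proof -
    define Y where "Y n = unvec d (mvec (d * d) (R ^\<^sub>m n) (vec_one d))" for n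
    have "r > 0" using r spectral_radius_nonneg[OF R(1)] \<open>d > 0\<close> by simp
    obtain C where C: "\<And>n s. s < d * d \<Longrightarrow> cmod (mvec (d * d) (R ^\<^sub>m n) (vec_one d) s) \<le> C * r ^ n"
      using mvec_pow_bound[OF R(1) r] by blast
    have "(1 / (c - ?l)) ^ n \<le> C * r ^ n" for n
    proof -
      have "(1 / (c - ?l)) ^ n \<le> Re (sform d (Y n) (basis_fun 0) (basis_fun 0))"
        using resolvent_iterates_lower[OF \<open>d > 0\<close> _ R, folded Y_def, of n] sqnorm_basis_fun[OF \<open>d > 0\<close>]
        unfolding c_def by (metis less_add_one mult.right_neutral)
      also have "\<dots> \<le> cmod (Y n $$ (0,0))" using sform_basis_fun[OF \<open>d > 0\<close> \<open>d > 0\<close>] complex_Re_le_cmod by simp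
      also have "\<dots> \<le> C * r ^ n" unfolding Y_def using C \<open>d > 0\<close> by (simp add: index_unvec)
      finally show ?thesis .
    qed
    thus ?thesis using pow_le_mult_pow_imp_le \<open>r > 0\<close> by blast
  qed
  hence "1 / (c - ?l) \<le> spectral_radius R" by (rule dense_ge)
  ultimately show False by simp
qed

end

theorem theorem1p1:
  fixes A :: "complex mat" and B :: "nat \<Rightarrow> complex mat" and d m :: nat
  assumes "d > 0" and "A \<in> carrier_mat d d"
    and "\<And>k. k \<in> {1..m} \<Longrightarrow> B k \<in> carrier_mat d d"
  defines "D \<equiv> kron (mat_conj A) A
               + msum (d*d) (\<lambda>k. kron (mat_conj (B k)) (B k)) {1..m}"
    and "C \<equiv> kron (mat_conj A) (1\<^sub>m d) + kron (1\<^sub>m d) A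
               + msum (d*d) (\<lambda>k. kron (mat_conj (B k)) (B k)) {1..m}"
    and "N \<equiv> mat_adjoint A * A + msum d (\<lambda>k. mat_adjoint (B k) * B k) {1..m}"
    and "M \<equiv> A + mat_adjoint A + msum d (\<lambda>k. mat_adjoint (B k) * B k) {1..m}"
  shows "spectral_min_re N \<le> spectral_radius D \<and> spectral_radius D \<le> spectral_abscissa N
       \<and> spectral_min_re M \<le> spectral_abscissa C \<and> spectral_abscissa C \<le> spectral_abscissa M"
proof -
  interpret kraus_system A B d m using assms(2,3) by unfold_locales
  have "D = mat_D" "C = mat_C" "N = mat_N" "M = mat_M"
    unfolding D_def C_def N_def M_def mat_D_def mat_C_def mat_N_def mat_M_def by simp_all
  thus ?thesis
    using spectral_min_re_N_le spectral_radius_D_le spectral_min_re_M_le spectral_abscissa_C_le assms(1)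
    by simp
qed
end
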